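(* Let $L$ and $L'$ be regular languages whose minimal DFAs have the same (i.e. isomorphic) underlying simple directed graphs, $G(L)\cong G(L')$. Then $g(L) = g(L')$.
   Context: A DFA over a finite alphabet $\Sigma$ is $(Q,q_0,F,\delta)$ with $Q$ finite, $\delta:Q\times\Sigma\to Q$. Its underlying undirected multigraph has vertex set $Q$ and one edge joining $q$ and $\delta(q,a)$ for each transition. The genus of a finite multigraph is the least genus of a closed orientable surface into which it embeds; $g(A)$ is the genus of the underlying multigraph of $A$; $g(L)=\min\{g(A): A\text{ a DFA recognizing }L\}$. The underlying simple directed graph $G(L)$ of $L$ has as vertices the states of the minimal DFA of $L$, with an edge $q\to q'$ iff $q\neq q'$ and $\delta(q,a)=q'$ for some letter $a$. *)

theory Defs
  imports Main "HOL-Combinatorics.Orbits" "HOL-Combinatorics.Permutations"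
begin

text \<open>A finite multigraph: vertex set V, edge index set E, and for each edge its two
  end vertices (loops allowed: both ends equal).\<close>

definition mg_darts :: "'e set \<Rightarrow> ('e \<times> bool) set" where
  "mg_darts E = E \<times> UNIV"

definition dart_vertex :: "('e \<Rightarrow> 'v \<times> 'v) \<Rightarrow> 'e \<times> bool \<Rightarrow> 'v" where
  "dart_vertex ends d = (if snd d then fst (ends (fst d)) else snd (ends (fst d)))"

definition dart_flip :: "'e \<times> bool \<Rightarrow> 'e \<times> bool" where
  "dart_flip d = (fst d, \<not> snd d)"

definition rotation_system :: "'e set \<Rightarrow> ('e \<Rightarrow> 'v \<times> 'v) \<Rightarrow> ('e \<times> bool \<Rightarrow> 'e \<times> bool) \<Rightarrow> bool" where
  "rotation_system E ends \<sigma> \<longleftrightarrow>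
     \<sigma> permutes mg_darts E \<and>
     (\<forall>d \<in> mg_darts E. orbit \<sigma> d = {d' \<in> mg_darts E. dart_vertex ends d' = dart_vertex ends d})"

definition isolated_vertices :: "'v set \<Rightarrow> 'e set \<Rightarrow> ('e \<Rightarrow> 'v \<times> 'v) \<Rightarrow> 'v set" where
  "isolated_vertices V E ends = {v \<in> V. \<forall>d \<in> mg_darts E. dart_vertex ends d \<noteq> v}"

text \<open>Faces of the cellular embedding determined by a rotation system: orbits of
  \<sigma> \<circ> flip on darts; an isolated vertex is a component embedded in a sphere with one face.\<close>

definition num_faces :: "'v set \<Rightarrow> 'e set \<Rightarrow> ('e \<Rightarrow> 'v \<times> 'v) \<Rightarrow> ('e \<times> bool \<Rightarrow> 'e \<times> bool) \<Rightarrow> nat" where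
  "num_faces V E ends \<sigma> =
     card ((\<lambda>d. orbit (\<sigma> \<circ> dart_flip) d) ` mg_darts E) + card (isolated_vertices V E ends)"

definition mg_adj :: "'e set \<Rightarrow> ('e \<Rightarrow> 'v \<times> 'v) \<Rightarrow> ('v \<times> 'v) set" where
  "mg_adj E ends = {(fst (ends e), snd (ends e)) | e. e \<in> E} \<union> {(snd (ends e), fst (ends e)) | e. e \<in> E}"

definition num_components :: "'v set \<Rightarrow> 'e set \<Rightarrow> ('e \<Rightarrow> 'v \<times> 'v) \<Rightarrow> nat" where
  "num_components V E ends = card (V // {(p, q). p \<in> V \<and> q \<in> V \<and> (p, q) \<in> (mg_adj E ends)\<^sup>*})"

text \<open>Genus of the embedding given by a rotation system (Euler's formula, summed over the
  connected components: sum_i (2 - V_i + E_i - F_i) / 2).\<close>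

definition rotation_genus :: "'v set \<Rightarrow> 'e set \<Rightarrow> ('e \<Rightarrow> 'v \<times> 'v) \<Rightarrow> ('e \<times> bool \<Rightarrow> 'e \<times> bool) \<Rightarrow> nat" where
  "rotation_genus V E ends \<sigma> =
     nat ((2 * int (num_components V E ends) - int (card V) + int (card E)
           - int (num_faces V E ends \<sigma>)) div 2)"

text \<open>Genus of a finite multigraph: least genus over all rotation systems (i.e. over all
  cellular embeddings of its components into closed orientable surfaces).\<close>

definition mg_genus :: "'v set \<Rightarrow> 'e set \<Rightarrow> ('e \<Rightarrow> 'v \<times> 'v) \<Rightarrow> nat" where
  "mg_genus V E ends = (LEAST n. \<exists>\<sigma>. rotation_system E ends \<sigma> \<and> rotation_genus V E ends \<sigma> = n)"

record 'a dfa =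
  states :: "nat set"
  init :: nat
  final :: "nat set"
  delta :: "nat \<Rightarrow> 'a \<Rightarrow> nat"

definition is_dfa :: "'a set \<Rightarrow> 'a dfa \<Rightarrow> bool" where
  "is_dfa \<Sigma> A \<longleftrightarrow> finite (states A) \<and> init A \<in> states A \<and> final A \<subseteq> states A \<and>
     (\<forall>q \<in> states A. \<forall>a \<in> \<Sigma>. delta A q a \<in> states A)"

definition dfa_lang :: "'a set \<Rightarrow> 'a dfa \<Rightarrow> 'a list set" where
  "dfa_lang \<Sigma> A = {w \<in> lists \<Sigma>. foldl (delta A) (init A) w \<in> final A}"

definition regular :: "'a set \<Rightarrow> 'a list set \<Rightarrow> bool" where
  "regular \<Sigma> L \<longleftrightarrow> (\<exists>A. is_dfa \<Sigma> A \<and> dfa_lang \<Sigma> A = L)"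

definition dfa_genus :: "'a set \<Rightarrow> 'a dfa \<Rightarrow> nat" where
  "dfa_genus \<Sigma> A = mg_genus (states A) (states A \<times> \<Sigma>) (\<lambda>(q, a). (q, delta A q a))"

definition lang_genus :: "'a set \<Rightarrow> 'a list set \<Rightarrow> nat" where
  "lang_genus \<Sigma> L = (LEAST n. \<exists>A. is_dfa \<Sigma> A \<and> dfa_lang \<Sigma> A = L \<and> dfa_genus \<Sigma> A = n)"

definition minimal_dfa :: "'a set \<Rightarrow> 'a list set \<Rightarrow> 'a dfa \<Rightarrow> bool" where
  "minimal_dfa \<Sigma> L M \<longleftrightarrow> is_dfa \<Sigma> M \<and> dfa_lang \<Sigma> M = L \<and>
     (\<forall>A. is_dfa \<Sigma> A \<and> dfa_lang \<Sigma> A = L \<longrightarrow> card (states M) \<le> card (states A))"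

definition dfa_simple_edge :: "'a set \<Rightarrow> 'a dfa \<Rightarrow> nat \<Rightarrow> nat \<Rightarrow> bool" where
  "dfa_simple_edge \<Sigma> A q q' \<longleftrightarrow> q \<noteq> q' \<and> (\<exists>a \<in> \<Sigma>. delta A q a = q')"

definition simple_digraph_iso :: "'a set \<Rightarrow> 'a dfa \<Rightarrow> 'a dfa \<Rightarrow> bool" where
  "simple_digraph_iso \<Sigma> A B \<longleftrightarrow> (\<exists>f. bij_betw f (states A) (states B) \<and>
     (\<forall>q \<in> states A. \<forall>q' \<in> states A.
        dfa_simple_edge \<Sigma> A q q' \<longleftrightarrow> dfa_simple_edge \<Sigma> B (f q) (f q')))"

end

theory Submission
  imports Defs
begin

section \<open>Cycles of a permutation composed with a transposition\<close>

definition num_cycles :: "('a \<Rightarrow> 'a) \<Rightarrow> 'a set \<Rightarrow> nat" where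
  "num_cycles f S = card (orbit f ` S)"

lemma permutes_comp_transpose:
  "f permutes S \<Longrightarrow> p \<in> S \<Longrightarrow> q \<in> S \<Longrightarrow> f \<circ> Transposition.transpose p q permutes S"
  by (rule permutes_compose[OF permutes_swap_id])

lemma orbit_two_cycle: "f a = b \<Longrightarrow> f b = a \<Longrightarrow> orbit f a = {a, b}"
proof
  assume ab: "f a = b" "f b = a"
  show "orbit f a \<subseteq> {a, b}"
  proof
    fix z assume "z \<in> orbit f a"
    then show "z \<in> {a, b}" by induct (use ab in auto)
  qed
  show "{a, b} \<subseteq> orbit f a"
    using orbit.base[of f a] orbit.step[of b f a] ab by simp
qed

lemma permutes_self_in_orbit: "f permutes S \<Longrightarrow> finite S \<Longrightarrow> p \<in> orbit f p"
  by (meson permutation_permutes permutation_self_in_orbit)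

lemma permutes_orbit_eq: "f permutes S \<Longrightarrow> finite S \<Longrightarrow> d \<in> orbit f p \<Longrightarrow> orbit f d = orbit f p"
  by (rule orbit_cyclic_eq3[OF cyclic_on_orbit])

lemma permutes_orbit_sym: "f permutes S \<Longrightarrow> finite S \<Longrightarrow> d \<in> orbit f p \<Longrightarrow> p \<in> orbit f d"
  using permutes_orbit_eq permutes_self_in_orbit by metis

lemma permutes_orbit_invariant:
  assumes "f permutes S" "\<And>z. z \<in> S \<Longrightarrow> h (f z) = h z" "d \<in> S" "z \<in> orbit f d"
  shows "z \<in> S \<and> h z = h d"
  using assms(4) by induct (auto simp: assms(2,3) permutes_in_image[OF assms(1)])

context
  fixes f :: "'a \<Rightarrow> 'a" and S :: "'a set"
  assumes perm: "f permutes S" and fin: "finite S"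
begin

private lemmas self_in_orbit = permutes_self_in_orbit[OF perm fin]
   and orbit_eq = permutes_orbit_eq[OF perm fin]
   and orbit_sym = permutes_orbit_sym[OF perm fin]

lemma orbit_comp_transpose_merge:
  assumes p: "p \<in> S" and q: "q \<in> S" and apart: "q = p \<or> q \<notin> orbit f p"
  defines "g \<equiv> f \<circ> Transposition.transpose p q"
  shows "orbit g p = orbit f p \<union> orbit f q"
    and "z \<notin> orbit f p \<union> orbit f q \<Longrightarrow> orbit g z = orbit f z"
proof -
  have g_other: "g z = f z" if "z \<noteq> p" "z \<noteq> q" for z
    using that by (simp add: g_def)
  have g_p: "g p = f q" and g_q: "g q = f p"
    by (simp_all add: g_def)
  show "orbit g p = orbit f p \<union> orbit f q"
  proof (cases "q = p")
    case False
    with apart have q_out: "q \<notin> orbit f p" and p_out: "p \<notin> orbit f q"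
      using orbit_sym by blast+
    have "orbit g p \<subseteq> orbit f p \<union> orbit f q"
    proof
      fix z assume "z \<in> orbit g p"
      then show "z \<in> orbit f p \<union> orbit f q"
      proof induct
        case (step z)
        then show ?case
          by (cases "z = p \<or> z = q") (auto simp: g_other g_p g_q intro: orbit.intros)
      qed (simp add: g_p orbit.base)
    qed
    moreover have q_part: "orbit f q \<subseteq> orbit g p"
    proof
      fix z assume "z \<in> orbit f q"
      then show "z \<in> orbit g p"
      proof induct
        case (step z)
        then show ?case
          using p_out g_other[of z] g_p by (metis orbit.base orbit.step)
      qed (metis g_p orbit.base)
    qed
    moreover have "orbit f p \<subseteq> orbit g p"
    proof
      have q_in: "q \<in> orbit g p"
        using q_part self_in_orbit by blast
      fix z assume "z \<in> orbit f p"
      then show "z \<in> orbit g p"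
      proof induct
        case (step z)
        then show ?case
          using q_out q_in g_other[of z] g_q by (metis orbit.step)
      qed (metis g_q q_in orbit.step)
    qed
    ultimately show ?thesis by blast
  qed (simp add: g_def)
  assume z: "z \<notin> orbit f p \<union> orbit f q"
  have "g w = f w" if "w \<in> orbit f z" for w
  proof -
    have "w \<noteq> p" "w \<noteq> q"
      using that z orbit_sym by blast+
    then show ?thesis by (rule g_other)
  qed
  then show "orbit g z = orbit f z"
    using orbit_cong[OF self_in_orbit, of z g] by blast
qed

lemma orbit_comp_transpose_mono:
  assumes "p \<in> S" "q \<in> S" "q = p \<or> q \<notin> orbit f p" and d: "d' \<in> orbit f d"
  shows "d' \<in> orbit (f \<circ> Transposition.transpose p q) d"
proof (cases "d \<in> orbit f p \<union> orbit f q")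
  case True
  have "orbit f d \<subseteq> orbit f p \<union> orbit f q"
    using True orbit_eq by blast
  moreover have "orbit (f \<circ> Transposition.transpose p q) d = orbit f p \<union> orbit f q"
    using True orbit_comp_transpose_merge(1)[OF assms(1-3)]
      permutes_orbit_eq[OF permutes_comp_transpose[OF perm assms(1,2)] fin, of d p] by simp
  ultimately show ?thesis using d by blast
qed (use d orbit_comp_transpose_merge(2)[OF assms(1-3)] in simp)

lemma num_cycles_comp_transpose_merge:
  assumes p: "p \<in> S" and q: "q \<in> S" and q_out: "q \<notin> orbit f p"
  shows "num_cycles (f \<circ> Transposition.transpose p q) S + 1 = num_cycles f S"
proof -
  define g where "g = f \<circ> Transposition.transpose p q"
  define P Q where "P = orbit f p" and "Q = orbit f q"
  note merge = orbit_comp_transpose_merge[OF p q disjI2[OF q_out], folded g_def P_def Q_def]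
  have g_perm: "g permutes S"
    unfolding g_def using perm p q by (rule permutes_comp_transpose)
  have "p \<in> P" "q \<in> Q" "P \<noteq> Q"
    using q_out self_in_orbit unfolding P_def Q_def by blast+
  have orbits_g: "orbit g ` S = insert (P \<union> Q) (orbit f ` S - {P, Q})"
  proof (intro set_eqI iffI)
    fix C assume "C \<in> orbit g ` S"
    then obtain d where d: "d \<in> S" "C = orbit g d" by blast
    show "C \<in> insert (P \<union> Q) (orbit f ` S - {P, Q})"
    proof (cases "d \<in> P \<union> Q")
      case True
      then have "orbit g d = P \<union> Q"
        using merge(1) permutes_orbit_eq[OF g_perm fin, of d p] by simp
      then show ?thesis using d by simp
    next
      case False
      then have "orbit f d \<noteq> P" "orbit f d \<noteq> Q"
        using self_in_orbit by blast+
      then show ?thesis using d False merge(2) by auto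
    qed
  next
    fix C assume C: "C \<in> insert (P \<union> Q) (orbit f ` S - {P, Q})"
    show "C \<in> orbit g ` S"
    proof (cases "C = P \<union> Q")
      case True
      then show ?thesis using merge(1) p by blast
    next
      case False
      then obtain d where d: "d \<in> S" "C = orbit f d" "C \<noteq> P" "C \<noteq> Q"
        using C by blast
      then have "d \<notin> P \<union> Q"
        using orbit_eq[of d p] orbit_eq[of d q] unfolding P_def Q_def by auto
      then have "C = orbit g d"
        using merge(2) d(2) by metis
      then show ?thesis by (rule rev_image_eqI[OF d(1)])
    qed
  qed
  have "P \<union> Q \<notin> orbit f ` S - {P, Q}"
  proof
    assume "P \<union> Q \<in> orbit f ` S - {P, Q}"
    then obtain d where d: "P \<union> Q = orbit f d" "P \<union> Q \<noteq> P" by blast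
    then have "orbit f p = orbit f d"
      using \<open>p \<in> P\<close> orbit_eq[of p d] by blast
    with d show False unfolding P_def by simp
  qed
  moreover have PQ: "{P, Q} \<subseteq> orbit f ` S"
    using p q unfolding P_def Q_def by blast
  then have "card (orbit f ` S - {P, Q}) + 2 = card (orbit f ` S)"
    using card_Diff_subset[OF _ PQ] card_mono[OF _ PQ] \<open>P \<noteq> Q\<close> fin by simp
  ultimately show ?thesis
    unfolding num_cycles_def g_def[symmetric] orbits_g using fin by simp
qed

lemma orbit_comp_transpose_split:
  assumes "p \<in> S" "q \<in> S" "p \<noteq> q" and q: "q \<in> orbit f p"
  shows "q \<notin> orbit (f \<circ> Transposition.transpose p q) p"
proof -
  define g where "g = f \<circ> Transposition.transpose p q"
  define k where "k = funpow_dist1 f p q"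
  have fk: "(f ^^ k) p = q" and k_pos: "1 \<le> k"
    unfolding k_def using funpow_dist1_prop[OF q] by simp_all
  define T where "T = {(f ^^ j) p | j. 1 \<le> j \<and> j \<le> k}"
  have p_out: "p \<notin> T"
  proof
    assume "p \<in> T"
    then obtain j where j: "p = (f ^^ j) p" "1 \<le> j" "j \<le> k"
      unfolding T_def by blast
    then have "k \<le> j"
      unfolding k_def using funpow_dist1_le_self[OF j(1)[symmetric] _ q] by simp
    with j fk \<open>p \<noteq> q\<close> show False by simp
  qed
  \<comment> \<open>The g-orbit of q runs through f p, ..., f^k p = q and then closes up without meeting p.\<close>
  have g_q: "g q \<in> T"
    unfolding T_def g_def using k_pos by (auto intro!: exI[of _ 1])
  have "orbit g q \<subseteq> T"
  proof
    fix z assume "z \<in> orbit g q"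
    then show "z \<in> T"
    proof induct
      case (step z)
      then obtain j where j: "z = (f ^^ j) p" "1 \<le> j" "j \<le> k"
        unfolding T_def by blast
      show ?case
      proof (cases "j = k")
        case True
        then have "z = q" using j(1) fk by simp
        then show ?thesis using g_q by simp
      next
        case False
        then have "z \<noteq> q"
          using j funpow_dist1_least[of j f p q] unfolding k_def by simp
        moreover have "z \<noteq> p" using step p_out by blast
        ultimately have "g z = (f ^^ Suc j) p" using j by (simp add: g_def)
        then show ?thesis unfolding T_def using j False by force
      qed
    qed (rule g_q)
  qed
  moreover have "g permutes S"
    unfolding g_def using perm assms(1,2) by (rule permutes_comp_transpose)
  ultimately show ?thesis
    using p_out permutes_orbit_sym[OF _ fin] unfolding g_def by blast
qed

lemma orbit_insert_fixed_point:
  assumes fx: "f x = x" and x: "x \<in> S" and \<alpha>: "\<alpha> \<in> S"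
  defines "g \<equiv> f \<circ> Transposition.transpose x \<alpha>"
  shows "orbit g x = insert x (orbit f \<alpha>)"
    and "z \<notin> insert x (orbit f \<alpha>) \<Longrightarrow> orbit g z = orbit f z"
    and "d' \<in> orbit f d \<Longrightarrow> d' \<in> orbit g d"
    and "d \<noteq> x \<Longrightarrow> orbit g d - {x} = orbit f d"
proof -
  have orbit_x: "orbit f x = {x}"
    using fx by (simp add: orbit_eq_singleton_iff)
  then have apart: "\<alpha> = x \<or> \<alpha> \<notin> orbit f x" by auto
  note merge = orbit_comp_transpose_merge[OF x \<alpha> apart, folded g_def, unfolded orbit_x]
  show g_x: "orbit g x = insert x (orbit f \<alpha>)"
    using merge(1) by simp
  show "z \<notin> insert x (orbit f \<alpha>) \<Longrightarrow> orbit g z = orbit f z"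
    using merge(2) by simp
  show "d' \<in> orbit f d \<Longrightarrow> d' \<in> orbit g d"
    unfolding g_def using x \<alpha> apart by (rule orbit_comp_transpose_mono)
  assume "d \<noteq> x"
  then have x_out: "x \<notin> orbit f d"
    using orbit_sym orbit_x by blast
  show "orbit g d - {x} = orbit f d"
  proof (cases "d \<in> orbit f \<alpha>")
    case True
    have "orbit g d = orbit g x"
      using True g_x permutes_orbit_eq[OF permutes_comp_transpose[OF perm x \<alpha>] fin]
      unfolding g_def by blast
    then show ?thesis
      using g_x orbit_eq[OF True] x_out by auto
  next
    case False
    then show ?thesis
      using merge(2)[of d] \<open>d \<noteq> x\<close> x_out by auto
  qed
qed

end

lemma num_cycles_comp_transpose_split:
  assumes perm: "f permutes S" and fin: "finite S"
    and p: "p \<in> S" and q: "q \<in> S" and "p \<noteq> q" "q \<in> orbit f p"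
  shows "num_cycles (f \<circ> Transposition.transpose p q) S = num_cycles f S + 1"
proof -
  define g where "g = f \<circ> Transposition.transpose p q"
  have "g permutes S"
    unfolding g_def using perm p q by (rule permutes_comp_transpose)
  moreover have "g \<circ> Transposition.transpose p q = f"
    unfolding g_def by (simp add: comp_assoc)
  ultimately show ?thesis
    using num_cycles_comp_transpose_merge[of g S p q] orbit_comp_transpose_split[OF assms]
    unfolding g_def using fin p q by simp
qed

lemma num_cycles_comp_transpose_le:
  assumes "f permutes S" "finite S" "p \<in> S" "q \<in> S"
  shows "num_cycles (f \<circ> Transposition.transpose p q) S \<le> num_cycles f S + 1"
  using num_cycles_comp_transpose_split[OF assms] num_cycles_comp_transpose_merge[OF assms]
  by (cases "p = q"; cases "q \<in> orbit f p") simp_all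

section \<open>Darts, faces and connected components\<close>

lemma dart_flip_flip [simp]: "dart_flip (dart_flip d) = d"
  by (simp add: dart_flip_def)

lemma dart_flip_in_darts [simp]: "dart_flip d \<in> mg_darts E \<longleftrightarrow> d \<in> mg_darts E"
  by (simp add: dart_flip_def mg_darts_def mem_Times_iff)

lemma dart_flip_eq_iff [simp]: "dart_flip a = dart_flip b \<longleftrightarrow> a = b"
  by (metis dart_flip_flip)

lemma dart_flip_transpose:
  "dart_flip (Transposition.transpose p q z) =
     Transposition.transpose (dart_flip p) (dart_flip q) (dart_flip z)"
  by (simp add: transpose_def)

lemma finite_mg_darts: "finite E \<Longrightarrow> finite (mg_darts E)"
  by (simp add: mg_darts_def)

lemma mg_darts_insert: "mg_darts (insert e E) = mg_darts E \<union> {(e, True), (e, False)}"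
  by (auto simp: mg_darts_def)

lemma mem_mg_darts [simp]: "(e, b) \<in> mg_darts E \<longleftrightarrow> e \<in> E"
  by (simp add: mg_darts_def)

lemma rotation_system_permutes: "rotation_system E ends \<sigma> \<Longrightarrow> \<sigma> permutes mg_darts E"
  by (simp add: rotation_system_def)

lemma rotation_system_orbit:
  "rotation_system E ends \<sigma> \<Longrightarrow> d \<in> mg_darts E \<Longrightarrow>
     orbit \<sigma> d = {d' \<in> mg_darts E. dart_vertex ends d' = dart_vertex ends d}"
  by (simp add: rotation_system_def)

lemma rotation_system_vertex:
  assumes "rotation_system E ends \<sigma>" "d \<in> mg_darts E"
  shows "dart_vertex ends (\<sigma> d) = dart_vertex ends d"
  using rotation_system_orbit[OF assms] orbit.base[of \<sigma> d] by simp

text \<open>The face permutation, made to fix every non-dart so that it permutes the darts.\<close>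

definition face_perm :: "('e \<times> bool \<Rightarrow> 'e \<times> bool) \<Rightarrow> 'e set \<Rightarrow> 'e \<times> bool \<Rightarrow> 'e \<times> bool" where
  "face_perm \<sigma> E = (\<lambda>z. if z \<in> mg_darts E then \<sigma> (dart_flip z) else z)"

lemma face_perm_permutes:
  assumes "\<sigma> permutes mg_darts E"
  shows "face_perm \<sigma> E permutes mg_darts E"
proof (rule bij_imp_permutes)
  have "bij_betw dart_flip (mg_darts E) (mg_darts E)"
    by (rule bij_betwI[of _ _ _ dart_flip]) auto
  then have "bij_betw (\<sigma> \<circ> dart_flip) (mg_darts E) (mg_darts E)"
    using permutes_imp_bij[OF assms] by (rule bij_betw_trans)
  then show "bij_betw (face_perm \<sigma> E) (mg_darts E) (mg_darts E)"
    by (rule bij_betw_cong[THEN iffD1, rotated]) (simp add: face_perm_def)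
qed (simp add: face_perm_def)

lemma num_faces_eq_num_cycles:
  assumes "\<sigma> permutes mg_darts E"
  shows "num_faces V E ends \<sigma> =
    num_cycles (face_perm \<sigma> E) (mg_darts E) + card (isolated_vertices V E ends)"
proof -
  have "orbit (\<sigma> \<circ> dart_flip) d = orbit (face_perm \<sigma> E) d" if "d \<in> mg_darts E" for d
    using that by (rule orbit_cong0) (auto simp: face_perm_def permutes_in_image[OF assms])
  then show ?thesis
    unfolding num_faces_def num_cycles_def by (metis (no_types, lifting) image_cong)
qed

lemma isolated_vertices_insert:
  "isolated_vertices V (insert e E) ends = isolated_vertices V E ends - {fst (ends e), snd (ends e)}"
  unfolding isolated_vertices_def mg_darts_insert by (auto simp: dart_vertex_def)

lemma finite_isolated_vertices: "finite V \<Longrightarrow> finite (isolated_vertices V E ends)"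
  by (simp add: isolated_vertices_def)

definition mg_conn :: "'e set \<Rightarrow> ('e \<Rightarrow> 'v \<times> 'v) \<Rightarrow> 'v \<Rightarrow> 'v \<Rightarrow> bool" where
  "mg_conn E ends p q \<longleftrightarrow> (p, q) \<in> (mg_adj E ends)\<^sup>*"

definition mg_component :: "'v set \<Rightarrow> 'e set \<Rightarrow> ('e \<Rightarrow> 'v \<times> 'v) \<Rightarrow> 'v \<Rightarrow> 'v set" where
  "mg_component V E ends p = {q \<in> V. mg_conn E ends p q}"

lemma mg_adj_insert:
  "mg_adj (insert e E) ends = mg_adj E ends \<union> {(fst (ends e), snd (ends e)), (snd (ends e), fst (ends e))}"
  unfolding mg_adj_def by auto

lemma converse_mg_adj [simp]: "(mg_adj E ends)\<inverse> = mg_adj E ends"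
  unfolding mg_adj_def by blast

lemma mg_conn_refl [simp]: "mg_conn E ends p p"
  by (simp add: mg_conn_def)

lemma mg_conn_sym: "mg_conn E ends p q \<Longrightarrow> mg_conn E ends q p"
  using rtrancl_converseI[of p q "mg_adj E ends"] unfolding mg_conn_def by simp

lemma mg_conn_trans: "mg_conn E ends p q \<Longrightarrow> mg_conn E ends q r \<Longrightarrow> mg_conn E ends p r"
  unfolding mg_conn_def by simp

lemma mg_conn_ends: "e \<in> E \<Longrightarrow> mg_conn E ends (fst (ends e)) (snd (ends e))"
  unfolding mg_conn_def mg_adj_def by (intro r_into_rtrancl) blast

lemma mg_conn_dart_flip:
  "d \<in> mg_darts E \<Longrightarrow> mg_conn E ends (dart_vertex ends d) (dart_vertex ends (dart_flip d))"
  using mg_conn_ends[of "fst d" E ends] mg_conn_sym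
  by (cases d) (auto simp: dart_vertex_def dart_flip_def mg_darts_def)

lemma mg_conn_mono: "mg_conn E ends p q \<Longrightarrow> mg_conn (insert e E) ends p q"
  unfolding mg_conn_def mg_adj_insert by (meson Un_upper1 rtrancl_mono subsetD)

lemma num_components_eq_card_components:
  "num_components V E ends = card (mg_component V E ends ` V)"
proof -
  have "V // {(p, q). p \<in> V \<and> q \<in> V \<and> (p, q) \<in> (mg_adj E ends)\<^sup>*} = mg_component V E ends ` V"
    unfolding quotient_def mg_component_def mg_conn_def by auto
  then show ?thesis unfolding num_components_def by simp
qed

lemma mg_component_eq:
  assumes "mg_conn E ends p q"
  shows "mg_component V E ends p = mg_component V E ends q"
proof -
  have "mg_conn E ends p r \<longleftrightarrow> mg_conn E ends q r" for r
    using mg_conn_trans[OF assms] mg_conn_trans[OF mg_conn_sym[OF assms]] by blast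
  then show ?thesis
    unfolding mg_component_def by simp
qed

lemma mg_component_eqD:
  assumes "mg_component V E ends p = mg_component V E ends q" "q \<in> V"
  shows "mg_conn E ends p q"
proof -
  from assms(1) have "q \<in> mg_component V E ends p \<longleftrightarrow> q \<in> mg_component V E ends q"
    by simp
  then show ?thesis
    using assms(2) by (simp add: mg_component_def)
qed

lemma mg_conn_insert_cases:
  assumes "mg_conn (insert e E) ends p q"
  defines "u \<equiv> fst (ends e)" and "v \<equiv> snd (ends e)"
  shows "mg_conn E ends p q \<or>
    ((mg_conn E ends p u \<or> mg_conn E ends p v) \<and> (mg_conn E ends u q \<or> mg_conn E ends v q))"
  using assms(1) unfolding mg_conn_def[of "insert e E"]
proof (induct rule: rtrancl_induct)
  case (step r q)
  from step(2) consider "(r, q) \<in> mg_adj E ends" | "r = u" "q = v" | "r = v" "q = u"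
    unfolding mg_adj_insert u_def v_def by (cases "ends e") auto
  then show ?case
  proof cases
    case 1
    then have "mg_conn E ends r q"
      unfolding mg_conn_def by simp
    then show ?thesis
      using step(3) mg_conn_trans[OF _ \<open>mg_conn E ends r q\<close>] by blast
  qed (use step(3) in auto)
qed simp

lemma num_components_insert_conn:
  assumes "mg_conn E ends (fst (ends e)) (snd (ends e))"
  shows "num_components V (insert e E) ends = num_components V E ends"
proof -
  define u v where "u = fst (ends e)" and "v = snd (ends e)"
  have uv: "mg_conn E ends u v" and vu: "mg_conn E ends v u"
    using assms mg_conn_sym[OF assms] unfolding u_def v_def by simp_all
  have "mg_conn (insert e E) ends p q \<longleftrightarrow> mg_conn E ends p q" for p q
  proof
    assume "mg_conn (insert e E) ends p q"
    then consider "mg_conn E ends p q"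
      | "mg_conn E ends p u \<or> mg_conn E ends p v" "mg_conn E ends u q \<or> mg_conn E ends v q"
      using mg_conn_insert_cases[of e E ends p q, folded u_def v_def] by blast
    then show "mg_conn E ends p q"
    proof cases
      case 2
      then have "mg_conn E ends p u" "mg_conn E ends u q"
        using mg_conn_trans[OF _ vu] mg_conn_trans[OF uv] by blast+
      then show ?thesis by (rule mg_conn_trans)
    qed
  qed (rule mg_conn_mono)
  then show ?thesis
    unfolding num_components_eq_card_components mg_component_def by simp
qed

lemma num_components_le_insert:
  assumes "finite V"
  shows "num_components V E ends \<le> num_components V (insert e E) ends + 1"
proof -
  define u v where "u = fst (ends e)" and "v = snd (ends e)"
  let ?C = "mg_component V E ends" and ?C' = "mg_component V (insert e E) ends"
  define lift where "lift = (\<lambda>K. \<Union>q\<in>K. ?C' q)"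
  have lift: "lift (?C p) = ?C' p" if "p \<in> V" for p
  proof -
    have "?C' q = ?C' p" if "q \<in> ?C p" for q
    proof -
      from that have "mg_conn E ends p q"
        by (simp add: mg_component_def)
      then show ?thesis
        by (rule mg_component_eq[OF mg_conn_mono, symmetric])
    qed
    moreover have "p \<in> ?C p"
      using that by (simp add: mg_component_def)
    ultimately show ?thesis
      unfolding lift_def by blast
  qed
  have "inj_on lift (?C ` V - {?C v})"
  proof (rule inj_onI)
    fix K1 K2 assume K1: "K1 \<in> ?C ` V - {?C v}" and K2: "K2 \<in> ?C ` V - {?C v}"
      and eq: "lift K1 = lift K2"
    obtain p q where p: "p \<in> V" "K1 = ?C p" and q: "q \<in> V" "K2 = ?C q"
      using K1 K2 by blast
    have "mg_conn (insert e E) ends p q"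
      using eq lift[OF p(1)] lift[OF q(1)] p(2) q by (intro mg_component_eqD) simp_all
    moreover have "\<not> mg_conn E ends p v" "\<not> mg_conn E ends v q"
      using K1 K2 p(2) q(2) mg_component_eq[of E ends p v V] mg_component_eq[of E ends v q V]
      by auto
    ultimately have "mg_conn E ends p q"
      using mg_conn_insert_cases[of e E ends p q, folded u_def v_def] mg_conn_trans[of E ends p u q]
      by blast
    then show "K1 = K2"
      using mg_component_eq p(2) q(2) by simp
  qed
  moreover have "lift ` (?C ` V - {?C v}) \<subseteq> ?C' ` V"
    using lift by auto
  ultimately have "card (?C ` V - {?C v}) \<le> card (?C' ` V)"
    by (intro card_inj_on_le) (simp_all add: assms)
  moreover have "card (?C ` V) \<le> card (?C ` V - {?C v}) + 1"
    using assms by (cases "?C v \<in> ?C ` V") (simp_all add: card_Suc_Diff1)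
  ultimately show ?thesis
    unfolding num_components_eq_card_components by linarith
qed

section \<open>Inserting an edge into a rotation system\<close>

locale edge_insertion =
  fixes E :: "'e set" and ends :: "'e \<Rightarrow> 'v \<times> 'v" and e :: 'e
  assumes finite_edges: "finite E" and new_edge: "e \<notin> E"
begin

abbreviation "x \<equiv> (e, True)"
abbreviation "y \<equiv> (e, False)"
abbreviation "D \<equiv> mg_darts E"
abbreviation "D' \<equiv> mg_darts (insert e E)"
abbreviation "vt \<equiv> dart_vertex ends"
abbreviation "u \<equiv> fst (ends e)"
abbreviation "v \<equiv> snd (ends e)"

lemma new_darts: "x \<notin> D" "y \<notin> D" "x \<in> D'" "y \<in> D'"
  using new_edge by simp_all

lemma darts_subset: "D \<subseteq> D'"
  by (auto simp: mg_darts_def)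

lemma darts_eq_diff: "D = D' - {x, y}"
  using new_darts by (auto simp: mg_darts_insert)

lemma old_dart_iff: "d \<in> D \<longleftrightarrow> d \<in> D' \<and> d \<noteq> x \<and> d \<noteq> y"
  using darts_eq_diff by blast

lemma finite_darts: "finite D" "finite D'"
  using finite_edges by (simp_all add: finite_mg_darts)

lemma vertex_new_darts [simp]: "vt x = u" "vt y = v"
  by (simp_all add: dart_vertex_def)

lemma flip_new_darts [simp]: "dart_flip x = y" "dart_flip y = x"
  by (simp_all add: dart_flip_def)

lemma vertex_transpose: "vt a = vt b \<Longrightarrow> vt (Transposition.transpose a b z) = vt z"
  by (simp add: transpose_def)

lemma permutes_new_darts:
  assumes "\<sigma> permutes D"
  shows "\<sigma> permutes D'" "\<sigma> x = x" "\<sigma> y = y"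
  using permutes_subset[OF assms darts_subset] permutes_not_in[OF assms] new_darts by auto

lemma orbit_face_perm_new_edge:
  assumes "\<sigma> permutes D"
  shows "orbit (face_perm \<sigma> (insert e E)) x = {x, y}"
    and "orbit (face_perm \<sigma> (insert e E)) y = {x, y}"
proof -
  have "face_perm \<sigma> (insert e E) x = y" "face_perm \<sigma> (insert e E) y = x"
    using permutes_new_darts[OF assms] new_darts by (simp_all add: face_perm_def)
  then show "orbit (face_perm \<sigma> (insert e E)) x = {x, y}"
    and "orbit (face_perm \<sigma> (insert e E)) y = {x, y}"
    using orbit_two_cycle by (metis insert_commute)+
qed

lemma num_faces_eq_num_cycles_insert:
  assumes \<sigma>: "\<sigma> permutes D"
  shows "num_faces V E ends \<sigma> + 1 =
    num_cycles (face_perm \<sigma> (insert e E)) D' + card (isolated_vertices V E ends)"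
proof -
  let ?\<phi> = "face_perm \<sigma> (insert e E)" and ?\<phi>E = "face_perm \<sigma> E"
  have "orbit ?\<phi> d = orbit ?\<phi>E d" if "d \<in> D" for d
  proof (rule orbit_cong0[OF that])
    show "?\<phi> \<in> D \<rightarrow> D" "\<And>z. z \<in> D \<Longrightarrow> ?\<phi> z = ?\<phi>E z"
      using permutes_in_image[OF \<sigma>] darts_subset by (auto simp: face_perm_def)
  qed
  then have "orbit ?\<phi> ` D' = insert {x, y} (orbit ?\<phi>E ` D)"
    using orbit_face_perm_new_edge[OF \<sigma>] by (auto simp: mg_darts_insert)
  moreover have "{x, y} \<notin> orbit ?\<phi>E ` D"
    using permutes_orbit_subset[OF face_perm_permutes[OF \<sigma>]] new_darts by blast
  ultimately have "num_cycles ?\<phi> D' = num_cycles ?\<phi>E D + 1"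
    unfolding num_cycles_def using finite_darts by simp
  then show ?thesis
    using num_faces_eq_num_cycles[OF \<sigma>] by simp
qed

lemma face_perm_splice:
  assumes \<alpha>: "\<alpha> \<in> D'" and \<beta>: "\<beta> \<in> D'"
  shows "face_perm (\<sigma> \<circ> Transposition.transpose y \<beta> \<circ> Transposition.transpose x \<alpha>) (insert e E) =
    face_perm \<sigma> (insert e E) \<circ> Transposition.transpose x (dart_flip \<beta>)
      \<circ> Transposition.transpose y (dart_flip \<alpha>)"
    (is "?lhs = ?rhs")
proof
  fix z
  let ?w = "Transposition.transpose x (dart_flip \<beta>) (Transposition.transpose y (dart_flip \<alpha>) z)"
  have flips: "dart_flip \<alpha> \<in> D'" "dart_flip \<beta> \<in> D'"
    using \<alpha> \<beta> by simp_all
  show "?lhs z = ?rhs z"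
  proof (cases "z \<in> D'")
    case True
    have "?w \<in> D'"
      using True flips new_darts by (simp add: transpose_def)
    moreover have "dart_flip ?w = Transposition.transpose y \<beta> (Transposition.transpose x \<alpha> (dart_flip z))"
      by (simp add: dart_flip_transpose)
    ultimately show ?thesis
      using True by (simp add: face_perm_def)
  next
    case False
    then have "?w = z"
      using flips new_darts by (metis transpose_apply_other)
    then show ?thesis
      using False by (simp add: face_perm_def)
  qed
qed

end

text \<open>Splicing the darts of a new edge e into a rotation system \<sigma> of E: x is placed right
  after \<alpha> and y right after \<beta> in the cyclic orders at the ends of e.\<close>

locale dart_insertion = edge_insertion +
  fixes \<sigma> and \<alpha> \<beta>
  assumes rotation: "rotation_system E ends \<sigma>"
    and \<alpha>_dart: "\<alpha> \<in> D'" and \<alpha>_vertex: "vt \<alpha> = u"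
    and \<alpha>_alone: "\<alpha> = x \<Longrightarrow> \<forall>d \<in> D' - {x}. vt d \<noteq> u"
    and \<beta>_dart: "\<beta> \<in> D'" and \<beta>_vertex: "vt \<beta> = v" and \<beta>_ne_x: "\<beta> \<noteq> x"
    and \<beta>_alone: "\<beta> = y \<Longrightarrow> \<forall>d \<in> D. vt d \<noteq> v"
begin

abbreviation "\<sigma>\<^sub>y \<equiv> \<sigma> \<circ> Transposition.transpose y \<beta>"
abbreviation "\<sigma>' \<equiv> \<sigma>\<^sub>y \<circ> Transposition.transpose x \<alpha>"

lemma \<sigma>_permutes: "\<sigma> permutes D"
  by (rule rotation_system_permutes[OF rotation])

lemmas \<sigma>_new_darts = permutes_new_darts[OF \<sigma>_permutes]

lemma \<sigma>\<^sub>y_permutes: "\<sigma>\<^sub>y permutes D'"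
  using \<sigma>_new_darts(1) new_darts(4) \<beta>_dart by (rule permutes_comp_transpose)

lemma \<sigma>\<^sub>y_x: "\<sigma>\<^sub>y x = x"
  using \<beta>_ne_x \<sigma>_new_darts(2) by (simp add: transpose_def)

lemma splice_permutes: "\<sigma>' permutes D'"
  using \<sigma>\<^sub>y_permutes new_darts(3) \<alpha>_dart by (rule permutes_comp_transpose)

lemmas orbit_insert_y = orbit_insert_fixed_point[OF \<sigma>_new_darts(1) finite_darts(2) \<sigma>_new_darts(3) new_darts(4) \<beta>_dart]
lemmas orbit_insert_x = orbit_insert_fixed_point[OF \<sigma>\<^sub>y_permutes finite_darts(2) \<sigma>\<^sub>y_x new_darts(3) \<alpha>_dart]

lemma splice_vertex:
  assumes "z \<in> D'"
  shows "vt (\<sigma>' z) = vt z"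
proof -
  have \<sigma>_vertex: "vt (\<sigma> w) = vt w" for w
  proof (cases "w \<in> D")
    case False
    then show ?thesis using permutes_not_in[OF \<sigma>_permutes] by simp
  qed (rule rotation_system_vertex[OF rotation])
  have "vt (\<sigma>' z) = vt (Transposition.transpose y \<beta> (Transposition.transpose x \<alpha> z))"
    by (simp add: \<sigma>_vertex)
  also have "\<dots> = vt (Transposition.transpose x \<alpha> z)"
    using \<beta>_vertex by (intro vertex_transpose) simp
  also have "\<dots> = vt z"
    using \<alpha>_vertex by (intro vertex_transpose) simp
  finally show ?thesis .
qed

lemma rotation_system_splice: "rotation_system (insert e E) ends \<sigma>'"
  unfolding rotation_system_def
proof (intro conjI ballI splice_permutes)
  let ?linked = "\<lambda>a b. b \<in> orbit \<sigma>' a"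
  have refl: "?linked a a" for a
    by (rule permutes_self_in_orbit[OF splice_permutes finite_darts(2)])
  have sym: "?linked b a" if "?linked a b" for a b
    using that by (rule permutes_orbit_sym[OF splice_permutes finite_darts(2)])
  have trans: "?linked a c" if "?linked a b" "?linked b c" for a b c
    using that orbit_trans by metis
  have old: "?linked a b" if "a \<in> D" "b \<in> D" "vt a = vt b" for a b
  proof -
    have "b \<in> orbit \<sigma> a"
      using that rotation_system_orbit[OF rotation, of a] by simp
    then show ?thesis
      by (intro orbit_insert_x(3) orbit_insert_y(3))
  qed
  have x_\<alpha>: "?linked x \<alpha>"
    unfolding orbit_insert_x(1) using permutes_self_in_orbit[OF \<sigma>\<^sub>y_permutes finite_darts(2)]
    by blast
  have y_\<beta>: "?linked y \<beta>"
  proof (rule orbit_insert_x(3))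
    show "\<beta> \<in> orbit \<sigma>\<^sub>y y"
      unfolding orbit_insert_y(1) using permutes_self_in_orbit[OF \<sigma>_new_darts(1) finite_darts(2)]
      by blast
  qed
  have y_old: "?linked y d" if d: "d \<in> D" "vt d = v" for d
  proof -
    have "\<beta> \<noteq> y"
      using \<beta>_alone d by blast
    then have "?linked \<beta> d"
      using d \<beta>_vertex \<beta>_dart \<beta>_ne_x old_dart_iff by (intro old) simp_all
    with y_\<beta> show ?thesis by (rule trans)
  qed
  have \<alpha>_ne_x: "\<alpha> \<noteq> x" if "d \<in> D' - {x}" "vt d = u" for d
    using \<alpha>_alone that by blast
  have x_old: "?linked x d" if d: "d \<in> D" "vt d = u" for d
  proof (cases "\<alpha> = y")
    case True
    have "?linked x y"
      using x_\<alpha> True by simp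
    moreover have "?linked y d"
      using y_old d \<alpha>_vertex True by simp
    ultimately show ?thesis by (rule trans)
  next
    case False
    moreover have "\<alpha> \<noteq> x"
      using \<alpha>_ne_x d old_dart_iff by blast
    ultimately have "?linked \<alpha> d"
      using d \<alpha>_vertex \<alpha>_dart old_dart_iff by (intro old) simp_all
    with x_\<alpha> show ?thesis by (rule trans)
  qed
  have x_y: "?linked x y" if uv: "u = v"
  proof (cases "\<alpha> = y")
    case False
    moreover have "\<alpha> \<noteq> x"
      using \<alpha>_ne_x[of y] uv new_darts by simp
    ultimately have "?linked \<alpha> y"
      using sym y_old uv \<alpha>_vertex \<alpha>_dart old_dart_iff by simp
    with x_\<alpha> show ?thesis by (rule trans)
  qed (use x_\<alpha> in simp)
  have at_u: "?linked x w" if "w \<in> D'" "vt w = u" for w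
    using that refl x_y x_old old_dart_iff by (cases "w = x \<or> w = y") auto
  have at_v: "?linked y w" if "w \<in> D'" "vt w = v" for w
    using that refl sym[OF x_y] y_old old_dart_iff by (cases "w = x \<or> w = y") auto
  fix d assume d: "d \<in> D'"
  have "z \<in> D' \<and> vt z = vt d" if "z \<in> orbit \<sigma>' d" for z
    using splice_permutes splice_vertex d that by (rule permutes_orbit_invariant)
  moreover have "?linked d z" if z: "z \<in> D'" "vt z = vt d" for z
  proof -
    consider "vt d = u" | "vt d = v" | "vt d \<noteq> u" "vt d \<noteq> v"
      by blast
    then show ?thesis
    proof cases
      case 1
      then have "?linked x d" "?linked x z"
        using at_u d z by simp_all
      then show ?thesis using trans[OF sym] by blast
    next
      case 2
      then have "?linked y d" "?linked y z"
        using at_v d z by simp_all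
      then show ?thesis using trans[OF sym] by blast
    next
      case 3
      then have "d \<noteq> x" "d \<noteq> y" "z \<noteq> x" "z \<noteq> y"
        using z(2) by auto
      then have "d \<in> D" "z \<in> D"
        using d z(1) by (simp_all add: old_dart_iff)
      then show ?thesis using z(2) by (intro old) simp_all
    qed
  qed
  ultimately show "orbit \<sigma>' d = {d' \<in> D'. vt d' = vt d}"
    by blast
qed

end

lemma card_Diff_pair:
  assumes "finite A" "u \<noteq> v"
  shows "card (A - {u, v}) + of_bool (u \<in> A) + of_bool (v \<in> A) = card A"
proof -
  have "card (A - {u, v}) = card A - card (A \<inter> {u, v})"
    by (rule card_Diff_subset_Int) simp
  moreover have "card (A \<inter> {u, v}) = of_bool (u \<in> A) + of_bool (v \<in> A)"
    using assms(2) by (cases "u \<in> A"; cases "v \<in> A") (simp_all add: Int_insert_right)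
  moreover have "card (A \<inter> {u, v}) \<le> card A"
    using assms(1) by (intro card_mono) auto
  ultimately show ?thesis by linarith
qed

context dart_insertion
begin

abbreviation "\<phi> \<equiv> face_perm \<sigma> (insert e E)"
abbreviation "\<psi> \<equiv> \<phi> \<circ> Transposition.transpose x (dart_flip \<beta>)"

lemma face_perm_splice_eq: "face_perm \<sigma>' (insert e E) = \<psi> \<circ> Transposition.transpose y (dart_flip \<alpha>)"
  using face_perm_splice[OF \<alpha>_dart \<beta>_dart] by simp

lemma \<phi>_permutes: "\<phi> permutes D'"
  by (rule face_perm_permutes[OF \<sigma>_new_darts(1)])

lemma \<psi>_permutes: "\<psi> permutes D'"
  using \<phi>_permutes new_darts(3) by (rule permutes_comp_transpose) (simp add: \<beta>_dart)

lemma \<beta>_old: "\<beta> \<noteq> y \<Longrightarrow> \<beta> \<in> D"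
  using \<beta>_dart \<beta>_ne_x old_dart_iff by simp

lemma flip_\<beta>_outside:
  assumes "\<beta> \<noteq> y"
  shows "dart_flip \<beta> \<in> D" "dart_flip \<beta> \<notin> orbit \<phi> x"
proof -
  show flip_old: "dart_flip \<beta> \<in> D"
    using \<beta>_old[OF assms] by simp
  then have "dart_flip \<beta> \<noteq> x" "dart_flip \<beta> \<noteq> y"
    using new_darts(1,2) by (auto simp del: dart_flip_in_darts)
  then show "dart_flip \<beta> \<notin> orbit \<phi> x"
    using orbit_face_perm_new_edge(1)[OF \<sigma>_permutes] by simp
qed

lemma num_cycles_\<psi>: "num_cycles \<psi> D' + of_bool (\<beta> \<noteq> y) = num_cycles \<phi> D'"
proof (cases "\<beta> = y")
  case False
  have "dart_flip \<beta> \<in> D'"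
    using flip_\<beta>_outside(1)[OF False] darts_subset by blast
  then show ?thesis
    using num_cycles_comp_transpose_merge[OF \<phi>_permutes finite_darts(2) new_darts(3) _
        flip_\<beta>_outside(2)[OF False]] False
    by simp
qed simp

lemma orbit_\<psi>_y:
  assumes "\<beta> \<noteq> y"
  shows "orbit \<psi> y = {x, y} \<union> orbit \<phi> (dart_flip \<beta>)"
proof -
  have "dart_flip \<beta> \<in> D'"
    using flip_\<beta>_outside(1)[OF assms] darts_subset by blast
  then have "orbit \<psi> x = {x, y} \<union> orbit \<phi> (dart_flip \<beta>)"
    using orbit_comp_transpose_merge(1)[OF \<phi>_permutes finite_darts(2) new_darts(3) _
        disjI2[OF flip_\<beta>_outside(2)[OF assms]]]
      orbit_face_perm_new_edge(1)[OF \<sigma>_permutes] by simp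
  moreover have "y \<in> orbit \<psi> x"
    using calculation by simp
  ultimately show ?thesis
    using permutes_orbit_eq[OF \<psi>_permutes finite_darts(2), of y x] by simp
qed

lemma num_faces_splice:
  "num_faces V (insert e E) ends \<sigma>' =
     num_cycles (\<psi> \<circ> Transposition.transpose y (dart_flip \<alpha>)) D' +
     card (isolated_vertices V (insert e E) ends)"
  using num_faces_eq_num_cycles[OF splice_permutes] face_perm_splice_eq by simp

lemma num_faces_splice_le:
  assumes "finite V" "v \<in> V"
  shows "num_faces V (insert e E) ends \<sigma>' \<le> num_faces V E ends \<sigma> + 1"
proof -
  let ?I = "isolated_vertices V E ends" and ?I' = "isolated_vertices V (insert e E) ends"
  have fin: "finite ?I"
    using assms(1) by (rule finite_isolated_vertices)
  have "num_cycles (\<psi> \<circ> Transposition.transpose y (dart_flip \<alpha>)) D' \<le> num_cycles \<psi> D' + 1"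
    using \<psi>_permutes finite_darts(2) new_darts(4) by (rule num_cycles_comp_transpose_le) (simp add: \<alpha>_dart)
  moreover have "card ?I' + of_bool (\<beta> = y) \<le> card ?I"
  proof (cases "\<beta> = y")
    case True
    then have "v \<in> ?I"
      using \<beta>_alone assms(2) by (simp add: isolated_vertices_def)
    moreover have "?I' \<subseteq> ?I - {v}"
      by (auto simp: isolated_vertices_insert)
    ultimately show ?thesis
      using card_mono[OF _ \<open>?I' \<subseteq> ?I - {v}\<close>] card_Suc_Diff1[OF fin] fin True by fastforce
  next
    case False
    have "?I' \<subseteq> ?I"
      by (auto simp: isolated_vertices_insert)
    then show ?thesis
      using card_mono[OF fin] False by simp
  qed
  ultimately show ?thesis
    using num_faces_splice num_faces_eq_num_cycles_insert[OF \<sigma>_permutes, of V] num_cycles_\<psi>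
    by (cases "\<beta> = y") auto
qed

text \<open>Deleting a bridge: the darts on the far side of e form a \<phi>-invariant set N that
  contains the face of y but no dart at u, so both transpositions merge faces.\<close>

lemma num_faces_splice_bridge:
  assumes "finite V" "u \<in> V" "v \<in> V" and bridge: "\<not> mg_conn E ends u v"
  shows "num_faces V (insert e E) ends \<sigma>' + 1 \<le> num_faces V E ends \<sigma>"
proof -
  let ?I = "isolated_vertices V E ends" and ?I' = "isolated_vertices V (insert e E) ends"
  define N where "N = {d \<in> D. \<not> mg_conn E ends u (vt d)}"
  have uv: "u \<noteq> v"
    using bridge by auto
  have same_side: "mg_conn E ends u (vt (dart_flip d)) \<longleftrightarrow> mg_conn E ends u (vt d)" if "d \<in> D" for d
    using mg_conn_dart_flip[OF that] mg_conn_sym mg_conn_trans by metis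
  have N_closed: "\<phi> d \<in> N" if "d \<in> N" for d
  proof -
    have d: "d \<in> D" "\<not> mg_conn E ends u (vt d)"
      using that unfolding N_def by auto
    then have "\<sigma> (dart_flip d) \<in> D" "vt (\<sigma> (dart_flip d)) = vt (dart_flip d)"
      using permutes_in_image[OF \<sigma>_permutes] rotation_system_vertex[OF rotation] by simp_all
    moreover have "\<phi> d = \<sigma> (dart_flip d)"
      using d(1) darts_subset by (auto simp: face_perm_def)
    ultimately show ?thesis
      using d same_side unfolding N_def by simp
  qed
  have orbit_N: "orbit \<phi> d \<subseteq> N" if "d \<in> N" for d
  proof
    fix z assume "z \<in> orbit \<phi> d"
    then show "z \<in> N" by induct (use that N_closed in auto)
  qed
  have "orbit \<psi> y \<subseteq> {x, y} \<union> N"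
  proof (cases "\<beta> = y")
    case False
    then have "dart_flip \<beta> \<in> N"
      using flip_\<beta>_outside(1) \<beta>_old same_side \<beta>_vertex bridge unfolding N_def by auto
    then show ?thesis
      using orbit_\<psi>_y[OF False] orbit_N by blast
  qed (use orbit_face_perm_new_edge(2)[OF \<sigma>_permutes] in auto)
  have num_cycles_\<phi>': "num_cycles (\<psi> \<circ> Transposition.transpose y (dart_flip \<alpha>)) D' + of_bool (\<alpha> \<noteq> x)
      = num_cycles \<psi> D'"
  proof (cases "\<alpha> = x")
    case False
    moreover have "\<alpha> \<noteq> y"
      using \<alpha>_vertex uv by auto
    ultimately have \<alpha>: "\<alpha> \<in> D"
      using \<alpha>_dart old_dart_iff by simp
    then have "dart_flip \<alpha> \<notin> N"
      using same_side \<alpha>_vertex unfolding N_def by simp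
    moreover have "dart_flip \<alpha> \<noteq> x" "dart_flip \<alpha> \<noteq> y"
      using \<alpha> dart_flip_in_darts[of \<alpha> E] new_darts(1,2) by (auto simp del: dart_flip_in_darts)
    ultimately have "dart_flip \<alpha> \<notin> orbit \<psi> y"
      using \<open>orbit \<psi> y \<subseteq> {x, y} \<union> N\<close> by blast
    then show ?thesis
      using num_cycles_comp_transpose_merge[OF \<psi>_permutes finite_darts(2) new_darts(4)] \<alpha>_dart False
      by simp
  qed simp
  have "card ?I' + of_bool (\<alpha> = x) + of_bool (\<beta> = y) \<le> card ?I"
  proof -
    have "\<alpha> = x \<Longrightarrow> u \<in> ?I" "\<beta> = y \<Longrightarrow> v \<in> ?I"
      using \<alpha>_alone \<beta>_alone assms(2,3) darts_subset new_darts(1)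
      unfolding isolated_vertices_def by blast+
    moreover have "card (?I - {u, v}) + of_bool (u \<in> ?I) + of_bool (v \<in> ?I) = card ?I"
      by (rule card_Diff_pair[OF finite_isolated_vertices[OF assms(1)] uv])
    ultimately show ?thesis
      unfolding isolated_vertices_insert by (cases "\<alpha> = x"; cases "\<beta> = y") auto
  qed
  then show ?thesis
    using num_faces_splice num_faces_eq_num_cycles_insert[OF \<sigma>_permutes, of V] num_cycles_\<psi> num_cycles_\<phi>'
    by (cases "\<alpha> = x"; cases "\<beta> = y") auto
qed

end

context edge_insertion
begin

lemma dart_insertionI:
  assumes "rotation_system E ends \<sigma>" "\<alpha> \<in> D'" "vt \<alpha> = u" "\<alpha> = x \<Longrightarrow> \<forall>d \<in> D' - {x}. vt d \<noteq> u"
    "\<beta> \<in> D'" "vt \<beta> = v" "\<beta> \<noteq> x" "\<beta> = y \<Longrightarrow> \<forall>d \<in> D. vt d \<noteq> v"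
  shows "dart_insertion E ends e \<sigma> \<alpha> \<beta>"
  using assms edge_insertion_axioms by (simp add: dart_insertion_def dart_insertion_axioms_def)

text \<open>Conversely, every rotation system of the enlarged graph is a splice: cut x and then y
  out of their cycles.\<close>

lemma rotation_system_insert_splice:
  assumes rot: "rotation_system (insert e E) ends \<tau>"
  obtains \<sigma> \<alpha> \<beta> where "dart_insertion E ends e \<sigma> \<alpha> \<beta>"
    and "\<tau> = \<sigma> \<circ> Transposition.transpose y \<beta> \<circ> Transposition.transpose x \<alpha>"
proof -
  have \<tau>: "\<tau> permutes D'"
    using rot by (rule rotation_system_permutes)
  have \<tau>_vertex: "vt (\<tau> z) = vt z" if "z \<in> D'" for z
    using rot that by (rule rotation_system_vertex)
  define \<alpha> where "\<alpha> = inv \<tau> x"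
  define \<tau>\<^sub>x where "\<tau>\<^sub>x = \<tau> \<circ> Transposition.transpose x \<alpha>"
  define \<beta> where "\<beta> = inv \<tau>\<^sub>x y"
  define \<sigma> where "\<sigma> = \<tau>\<^sub>x \<circ> Transposition.transpose y \<beta>"
  have \<alpha>: "\<alpha> \<in> D'" "\<tau> \<alpha> = x"
    unfolding \<alpha>_def using permutes_inv[OF \<tau>] permutes_inverses(1)[OF \<tau>] new_darts(3)
    by (simp_all add: permutes_in_image)
  have \<tau>\<^sub>x: "\<tau>\<^sub>x permutes D'" "\<tau>\<^sub>x x = x"
    unfolding \<tau>\<^sub>x_def using permutes_comp_transpose[OF \<tau> new_darts(3) \<alpha>(1)] \<alpha>(2) by simp_all
  have \<beta>: "\<beta> \<in> D'" "\<tau>\<^sub>x \<beta> = y"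
    unfolding \<beta>_def using permutes_inv[OF \<tau>\<^sub>x(1)] permutes_inverses(1)[OF \<tau>\<^sub>x(1)] new_darts(4)
    by (simp_all add: permutes_in_image)
  have \<beta>_ne_x: "\<beta> \<noteq> x"
    using \<beta>(2) \<tau>\<^sub>x(2) by auto
  have \<sigma>: "\<sigma> permutes D'" "\<sigma> x = x" "\<sigma> y = y"
    unfolding \<sigma>_def using permutes_comp_transpose[OF \<tau>\<^sub>x(1) new_darts(4) \<beta>(1)] \<tau>\<^sub>x(2) \<beta>(2) \<beta>_ne_x
    by (simp_all add: transpose_def)
  have \<tau>_eq: "\<tau> = \<sigma> \<circ> Transposition.transpose y \<beta> \<circ> Transposition.transpose x \<alpha>"
    and \<tau>\<^sub>x_eq: "\<tau>\<^sub>x = \<sigma> \<circ> Transposition.transpose y \<beta>"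
    unfolding \<sigma>_def \<tau>\<^sub>x_def by (simp_all add: comp_assoc)
  have \<tau>_eq': "\<tau> = \<tau>\<^sub>x \<circ> Transposition.transpose x \<alpha>"
    unfolding \<tau>\<^sub>x_def by (simp add: comp_assoc)
  have \<alpha>_vertex: "vt \<alpha> = u"
    using \<tau>_vertex[OF \<alpha>(1)] \<alpha>(2) by simp
  have \<beta>_vertex: "vt \<beta> = v"
  proof -
    have "v = vt (\<tau> (Transposition.transpose x \<alpha> \<beta>))"
      using \<beta>(2) unfolding \<tau>\<^sub>x_def by simp
    also have "\<dots> = vt \<beta>"
      using \<tau>_vertex \<alpha> \<beta>(1) new_darts(3) \<alpha>_vertex
      by (simp add: vertex_transpose transpose_def)
    finally show ?thesis by simp
  qed
  have "rotation_system E ends \<sigma>"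
    unfolding rotation_system_def
  proof (intro conjI ballI)
    show "\<sigma> permutes D"
      using \<sigma> by (intro permutes_superset[OF \<sigma>(1)]) (auto simp: old_dart_iff)
    fix d assume d: "d \<in> D"
    then have "d \<noteq> x" "d \<noteq> y"
      using new_darts by auto
    have "orbit \<sigma> d = orbit \<tau>\<^sub>x d - {y}"
      unfolding \<tau>\<^sub>x_eq
      by (rule orbit_insert_fixed_point(4)[OF \<sigma>(1) finite_darts(2) \<sigma>(3) new_darts(4) \<beta>(1), symmetric])
        (rule \<open>d \<noteq> y\<close>)
    also have "orbit \<tau>\<^sub>x d = orbit \<tau> d - {x}"
      unfolding \<tau>_eq' 
      by (rule orbit_insert_fixed_point(4)[OF \<tau>\<^sub>x(1) finite_darts(2) \<tau>\<^sub>x(2) new_darts(3) \<alpha>(1), symmetric])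
        (rule \<open>d \<noteq> x\<close>)
    also have "orbit \<tau> d - {x} - {y} = {d' \<in> D. vt d' = vt d}"
      using rotation_system_orbit[OF rot] d darts_subset old_dart_iff by auto
    finally show "orbit \<sigma> d = {d' \<in> D. vt d' = vt d}" .
  qed
  moreover have "\<forall>d \<in> D' - {x}. vt d \<noteq> u" if "\<alpha> = x"
  proof -
    have "orbit \<tau> x = {x}"
      using \<alpha>(2) that by (simp add: orbit_eq_singleton_iff)
    then show ?thesis
      using rotation_system_orbit[OF rot new_darts(3)] by auto
  qed
  moreover have "\<forall>d \<in> D. vt d \<noteq> v" if "\<beta> = y"
  proof -
    have "\<tau>\<^sub>x y = y"
      using \<beta>(2) that by simp
    then have "orbit \<tau> y \<subseteq> {x, y}"
      using orbit_two_cycle[of \<tau> y x] \<tau>\<^sub>x(2) orbit_eq_singleton_iff[of \<tau> y]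
      unfolding \<tau>\<^sub>x_def by (cases "\<alpha> = y") (auto simp: transpose_def)
    then show ?thesis
      using rotation_system_orbit[OF rot new_darts(4)] darts_subset new_darts(1,2) by auto
  qed
  ultimately have "dart_insertion E ends e \<sigma> \<alpha> \<beta>"
    using \<alpha> \<alpha>_vertex \<beta> \<beta>_vertex \<beta>_ne_x by (intro dart_insertionI)
  then show ?thesis using \<tau>_eq by (rule that)
qed

lemma num_faces_insert_parallel:
  assumes rot: "rotation_system E ends \<sigma>" and e0: "e0 \<in> E" "ends e0 = ends e"
  obtains \<sigma>' where "rotation_system (insert e E) ends \<sigma>'"
    and "num_faces V (insert e E) ends \<sigma>' = num_faces V E ends \<sigma> + 1"
proof -
  define x0 y0 where "x0 = (e0, True)" and "y0 = (e0, False)"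
  have \<sigma>: "\<sigma> permutes D"
    using rot by (rule rotation_system_permutes)
  have x0: "x0 \<in> D" "vt x0 = u" and y0: "y0 \<in> D" "vt y0 = v"
    using e0 unfolding x0_def y0_def by (simp_all add: dart_vertex_def)
  define \<beta> where "\<beta> = inv \<sigma> y0"
  have \<beta>: "\<beta> \<in> D" "\<sigma> \<beta> = y0"
    unfolding \<beta>_def using permutes_inv[OF \<sigma>] permutes_inverses(1)[OF \<sigma>] y0(1)
    by (simp_all add: permutes_in_image)
  have "vt \<beta> = v"
    using rotation_system_vertex[OF rot \<beta>(1)] \<beta>(2) y0(2) by simp
  then interpret S: dart_insertion E ends e \<sigma> x0 \<beta>
    using rot x0 \<beta>(1) darts_subset new_darts by (intro dart_insertionI) auto
  have \<beta>_ne_y: "\<beta> \<noteq> y"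
    using \<beta>(1) new_darts by auto
  have "S.\<phi> (dart_flip \<beta>) = y0"
    using \<beta> darts_subset by (auto simp: face_perm_def)
  then have "y0 \<in> orbit S.\<phi> (dart_flip \<beta>)"
    using orbit.base[of S.\<phi> "dart_flip \<beta>"] by simp
  then have "y0 \<in> orbit S.\<psi> y"
    using S.orbit_\<psi>_y[OF \<beta>_ne_y] by simp
  then have "num_cycles (S.\<psi> \<circ> Transposition.transpose y y0) D' = num_cycles S.\<psi> D' + 1"
    using S.\<psi>_permutes finite_darts(2) new_darts(4) y0(1) darts_subset new_darts(2)
    by (intro num_cycles_comp_transpose_split) auto
  moreover have "u \<notin> isolated_vertices V E ends" "v \<notin> isolated_vertices V E ends"
    using x0 y0 by (auto simp: isolated_vertices_def)
  then have "isolated_vertices V (insert e E) ends = isolated_vertices V E ends"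
    by (simp add: isolated_vertices_insert)
  moreover have "dart_flip x0 = y0"
    by (simp add: x0_def y0_def dart_flip_def)
  ultimately have "num_faces V (insert e E) ends S.\<sigma>' = num_faces V E ends \<sigma> + 1"
    using S.num_faces_splice S.num_cycles_\<psi> \<beta>_ne_y num_faces_eq_num_cycles_insert[OF \<sigma>, of V] by simp
  with S.rotation_system_splice show ?thesis by (rule that)
qed

lemma num_faces_insert_loop:
  assumes rot: "rotation_system E ends \<sigma>" and loop: "u = v" and d: "d \<in> D" "vt d = u"
  obtains \<sigma>' where "rotation_system (insert e E) ends \<sigma>'"
    and "num_faces V (insert e E) ends \<sigma>' = num_faces V E ends \<sigma> + 1"
proof -
  have \<sigma>: "\<sigma> permutes D"
    using rot by (rule rotation_system_permutes)
  interpret S: dart_insertion E ends e \<sigma> y d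
    using rot loop d darts_subset new_darts by (intro dart_insertionI) auto
  have d_ne_y: "d \<noteq> y"
    using d new_darts by auto
  have "x \<in> orbit S.\<psi> y"
    using S.orbit_\<psi>_y[OF d_ne_y] by simp
  then have "num_cycles (S.\<psi> \<circ> Transposition.transpose y x) D' = num_cycles S.\<psi> D' + 1"
    using S.\<psi>_permutes finite_darts(2) new_darts by (intro num_cycles_comp_transpose_split) auto
  moreover have "u \<notin> isolated_vertices V E ends"
    using d by (auto simp: isolated_vertices_def)
  then have "isolated_vertices V (insert e E) ends = isolated_vertices V E ends"
    using loop by (simp add: isolated_vertices_insert)
  ultimately have "num_faces V (insert e E) ends S.\<sigma>' = num_faces V E ends \<sigma> + 1"
    using S.num_faces_splice S.num_cycles_\<psi> d_ne_y num_faces_eq_num_cycles_insert[OF \<sigma>, of V] by simp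
  with S.rotation_system_splice show ?thesis by (rule that)
qed

lemma num_faces_insert_isolated_loop:
  assumes "finite V" and rot: "rotation_system E ends \<sigma>" and loop: "u = v" "u \<in> V"
    and isolated: "\<forall>d \<in> D. vt d \<noteq> u"
  obtains \<sigma>' where "rotation_system (insert e E) ends \<sigma>'"
    and "num_faces V (insert e E) ends \<sigma>' = num_faces V E ends \<sigma> + 1"
proof -
  have \<sigma>: "\<sigma> permutes D"
    using rot by (rule rotation_system_permutes)
  interpret S: dart_insertion E ends e \<sigma> y y
    using rot loop isolated new_darts by (intro dart_insertionI) auto
  have "x \<in> orbit S.\<phi> y"
    using orbit_face_perm_new_edge(2)[OF \<sigma>] by simp
  then have "num_cycles (S.\<phi> \<circ> Transposition.transpose y x) D' = num_cycles S.\<phi> D' + 1"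
    using S.\<phi>_permutes finite_darts(2) new_darts by (intro num_cycles_comp_transpose_split) auto
  moreover have "u \<in> isolated_vertices V E ends"
    using loop isolated by (simp add: isolated_vertices_def)
  moreover have "isolated_vertices V (insert e E) ends = isolated_vertices V E ends - {u}"
    using loop by (simp add: isolated_vertices_insert)
  ultimately have "num_faces V (insert e E) ends S.\<sigma>' = num_faces V E ends \<sigma> + 1"
    using S.num_faces_splice num_faces_eq_num_cycles_insert[OF \<sigma>, of V]
      card_Suc_Diff1[OF finite_isolated_vertices[OF \<open>finite V\<close>], of u E ends] by simp
  with S.rotation_system_splice show ?thesis by (rule that)
qed

end

section \<open>Monotonicity of the genus\<close>

definition euler_genus :: "'v set \<Rightarrow> 'e set \<Rightarrow> ('e \<Rightarrow> 'v \<times> 'v) \<Rightarrow> ('e \<times> bool \<Rightarrow> 'e \<times> bool) \<Rightarrow> int" where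
  "euler_genus V E ends \<sigma> =
     2 * int (num_components V E ends) - int (card V) + int (card E) - int (num_faces V E ends \<sigma>)"

lemma rotation_genus_mono:
  "euler_genus V E ends \<sigma> \<le> euler_genus V' E' ends' \<sigma>' \<Longrightarrow>
     rotation_genus V E ends \<sigma> \<le> rotation_genus V' E' ends' \<sigma>'"
  unfolding rotation_genus_def euler_genus_def[symmetric] by (intro nat_mono zdiv_mono1) simp_all

context edge_insertion
begin

lemma card_insert_edge: "card (insert e E) = card E + 1"
  using finite_edges new_edge by simp

lemma rotation_system_insert:
  assumes rot: "rotation_system E ends \<sigma>"
  shows "\<exists>\<sigma>'. rotation_system (insert e E) ends \<sigma>'"
proof -
  define \<alpha> where "\<alpha> = (if \<exists>d \<in> D. vt d = u then SOME d. d \<in> D \<and> vt d = u else if u = v then y else x)"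
  define \<beta> where "\<beta> = (if \<exists>d \<in> D. vt d = v then SOME d. d \<in> D \<and> vt d = v else y)"
  have \<alpha>: "\<alpha> \<in> D' \<and> vt \<alpha> = u \<and> (\<alpha> = x \<longrightarrow> (\<forall>d \<in> D' - {x}. vt d \<noteq> u))"
  proof (cases "\<exists>d \<in> D. vt d = u")
    case True
    then have "\<exists>d. d \<in> D \<and> vt d = u" by blast
    from someI_ex[OF this] have "\<alpha> \<in> D" "vt \<alpha> = u"
      using True unfolding \<alpha>_def by simp_all
    moreover have "\<alpha> \<noteq> x"
      using \<open>\<alpha> \<in> D\<close> new_darts(1) by blast
    ultimately show ?thesis
      using darts_subset by auto
  next
    case False
    have "\<forall>d \<in> D' - {x}. vt d \<noteq> u" if "u \<noteq> v"
    proof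
      fix d assume "d \<in> D' - {x}"
      then have "d = y \<or> d \<in> D"
        using old_dart_iff by blast
      then show "vt d \<noteq> u"
        using False that by auto
    qed
    then show ?thesis
      unfolding \<alpha>_def using False new_darts(3,4) by auto
  qed
  have \<beta>: "\<beta> \<in> D' \<and> vt \<beta> = v \<and> \<beta> \<noteq> x \<and> (\<beta> = y \<longrightarrow> (\<forall>d \<in> D. vt d \<noteq> v))"
  proof (cases "\<exists>d \<in> D. vt d = v")
    case True
    then have "\<exists>d. d \<in> D \<and> vt d = v" by blast
    from someI_ex[OF this] have "\<beta> \<in> D" "vt \<beta> = v"
      using True unfolding \<beta>_def by simp_all
    moreover have "\<beta> \<noteq> x" "\<beta> \<noteq> y"
      using \<open>\<beta> \<in> D\<close> new_darts(1,2) by blast+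
    ultimately show ?thesis
      using darts_subset by auto
  next
    case False
    then show ?thesis
      unfolding \<beta>_def using new_darts(4) by auto
  qed
  interpret dart_insertion E ends e \<sigma> \<alpha> \<beta>
    using rot \<alpha> \<beta> by (intro dart_insertionI) auto
  show ?thesis
    using rotation_system_splice by blast
qed

lemma euler_genus_insert_parallel_or_loop:
  assumes "finite V" and rot: "rotation_system E ends \<sigma>"
    and par: "(\<exists>e0 \<in> E. ends e0 = ends e) \<or> (u = v \<and> u \<in> V)"
  obtains \<sigma>' where "rotation_system (insert e E) ends \<sigma>'"
    and "euler_genus V (insert e E) ends \<sigma>' = euler_genus V E ends \<sigma>"
proof -
  have "mg_conn E ends u v"
  proof (cases "\<exists>e0 \<in> E. ends e0 = ends e")
    case True
    then obtain e0 where "e0 \<in> E" "ends e0 = ends e" by blast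
    then show ?thesis using mg_conn_ends[of e0 E ends] by simp
  qed (use par in simp)
  then have components: "num_components V (insert e E) ends = num_components V E ends"
    by (rule num_components_insert_conn)
  obtain \<sigma>' where rot': "rotation_system (insert e E) ends \<sigma>'"
    and faces: "num_faces V (insert e E) ends \<sigma>' = num_faces V E ends \<sigma> + 1"
  proof -
    consider (parallel) e0 where "e0 \<in> E" "ends e0 = ends e"
      | (loop) d where "u = v" "d \<in> D" "vt d = u"
      | (isolated_loop) "u = v" "u \<in> V" "\<forall>d \<in> D. vt d \<noteq> u"
      using par by blast
    then show ?thesis
    proof cases
      case parallel
      then show ?thesis using that by (rule num_faces_insert_parallel[OF rot])
    next
      case loop
      then show ?thesis using that by (rule num_faces_insert_loop[OF rot])
    next
      case isolated_loop
      then show ?thesis using that by (rule num_faces_insert_isolated_loop[OF \<open>finite V\<close> rot])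
    qed
  qed
  have "euler_genus V (insert e E) ends \<sigma>' = euler_genus V E ends \<sigma>"
    unfolding euler_genus_def components faces card_insert_edge by simp
  with rot' show ?thesis by (rule that)
qed

end

lemma (in dart_insertion) euler_genus_splice_ge:
  assumes "finite V" "u \<in> V" "v \<in> V"
  shows "euler_genus V E ends \<sigma> \<le> euler_genus V (insert e E) ends \<sigma>'"
proof (cases "mg_conn E ends u v")
  case True
  then show ?thesis
    using num_components_insert_conn[OF True, of V] num_faces_splice_le[OF assms(1,3)]
    unfolding euler_genus_def card_insert_edge by simp
next
  case False
  then show ?thesis
    using num_components_le_insert[OF assms(1), of E ends e] num_faces_splice_bridge[OF assms False]
    unfolding euler_genus_def card_insert_edge by simp
qed

lemma rotation_system_exists: "finite E \<Longrightarrow> \<exists>\<sigma>. rotation_system E ends \<sigma>"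
proof (induct E rule: finite_induct)
  case empty
  have "rotation_system {} ends id"
    by (simp add: rotation_system_def mg_darts_def permutes_id)
  then show ?case by blast
next
  case (insert e E)
  then interpret edge_insertion E ends e
    by unfold_locales
  show ?case
    using insert rotation_system_insert by blast
qed

lemma mg_genus_attained:
  assumes "finite E"
  obtains \<sigma> where "rotation_system E ends \<sigma>" "rotation_genus V E ends \<sigma> = mg_genus V E ends"
proof -
  have "\<exists>n \<sigma>. rotation_system E ends \<sigma> \<and> rotation_genus V E ends \<sigma> = n"
    using rotation_system_exists[OF assms] by blast
  from LeastI_ex[OF this] obtain \<sigma> where
    "rotation_system E ends \<sigma>" "rotation_genus V E ends \<sigma> = mg_genus V E ends"
    unfolding mg_genus_def by blast
  then show ?thesis by (rule that)
qed

lemma mg_genus_le: "rotation_system E ends \<sigma> \<Longrightarrow> mg_genus V E ends \<le> rotation_genus V E ends \<sigma>"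
  unfolding mg_genus_def by (rule Least_le) blast

context edge_insertion
begin

lemma mg_genus_insert_parallel_or_loop:
  assumes "finite V" "(\<exists>e0 \<in> E. ends e0 = ends e) \<or> (u = v \<and> u \<in> V)"
  shows "mg_genus V (insert e E) ends \<le> mg_genus V E ends"
proof -
  obtain \<sigma> where rot: "rotation_system E ends \<sigma>" and \<sigma>: "rotation_genus V E ends \<sigma> = mg_genus V E ends"
    using mg_genus_attained[OF finite_edges] .
  obtain \<sigma>' where rot': "rotation_system (insert e E) ends \<sigma>'"
    and eq: "euler_genus V (insert e E) ends \<sigma>' = euler_genus V E ends \<sigma>"
    using euler_genus_insert_parallel_or_loop[OF assms(1) rot assms(2)] .
  have "mg_genus V (insert e E) ends \<le> rotation_genus V (insert e E) ends \<sigma>'"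
    using rot' by (rule mg_genus_le)
  also have "\<dots> \<le> rotation_genus V E ends \<sigma>"
    using eq by (intro rotation_genus_mono) simp
  finally show ?thesis using \<sigma> by simp
qed

lemma mg_genus_le_insert:
  assumes "finite V" "u \<in> V" "v \<in> V"
  shows "mg_genus V E ends \<le> mg_genus V (insert e E) ends"
proof -
  have "finite (insert e E)"
    using finite_edges by simp
  then obtain \<tau> where rot: "rotation_system (insert e E) ends \<tau>"
    and \<tau>: "rotation_genus V (insert e E) ends \<tau> = mg_genus V (insert e E) ends"
    by (rule mg_genus_attained)
  from rot obtain \<sigma> \<alpha> \<beta> where S: "dart_insertion E ends e \<sigma> \<alpha> \<beta>"
    and \<tau>_eq: "\<tau> = \<sigma> \<circ> Transposition.transpose y \<beta> \<circ> Transposition.transpose x \<alpha>"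
    by (rule rotation_system_insert_splice)
  interpret S: dart_insertion E ends e \<sigma> \<alpha> \<beta>
    by (rule S)
  have "mg_genus V E ends \<le> rotation_genus V E ends \<sigma>"
    using S.rotation by (rule mg_genus_le)
  also have "\<dots> \<le> rotation_genus V (insert e E) ends \<tau>"
    unfolding \<tau>_eq using S.euler_genus_splice_ge[OF assms] by (rule rotation_genus_mono)
  finally show ?thesis using \<tau> by simp
qed

end

lemma orbit_conj:
  assumes "f permutes S" "finite S" "d \<in> S" "\<And>z. z \<in> S \<Longrightarrow> g (h z) = h (f z)"
  shows "orbit g (h d) = h ` orbit f d"
proof -
  have "h ` orbit f d = orbit g (h d)"
    by (rule orbit_inverse[OF permutes_self_in_orbit[OF assms(1,2)]])
      (use assms(4) permutes_orbit_subset[OF assms(1,3)] in blast)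
  then show ?thesis by simp
qed

lemma num_cycles_conj:
  assumes f: "f permutes S" "finite S" and h: "bij_betw h S S'"
    and conj: "\<And>z. z \<in> S \<Longrightarrow> g (h z) = h (f z)"
  shows "num_cycles g S' = num_cycles f S"
proof -
  have "orbit g (h d) = h ` orbit f d" if "d \<in> S" for d
    using f that conj by (rule orbit_conj)
  then have "orbit g ` S' = image h ` orbit f ` S"
    using bij_betw_imp_surj_on[OF h] by (auto simp: image_image)
  moreover have "inj_on (image h) (orbit f ` S)"
  proof (rule inj_onI)
    fix A B assume "A \<in> orbit f ` S" "B \<in> orbit f ` S" "h ` A = h ` B"
    moreover have "A \<subseteq> S" "B \<subseteq> S"
      using calculation(1,2) permutes_orbit_subset[OF f(1)] by auto
    ultimately show "A = B"
      using inj_on_image_eq_iff[OF bij_betw_imp_inj_on[OF h]] by blast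
  qed
  ultimately show ?thesis
    unfolding num_cycles_def by (simp add: card_image)
qed

lemma mg_genus_image_le:
  assumes finE: "finite E" and inj: "inj_on h E" and ends': "\<And>e. e \<in> E \<Longrightarrow> ends' (h e) = ends e"
  shows "mg_genus V (h ` E) ends' \<le> mg_genus V E ends"
proof -
  obtain \<sigma> where rot: "rotation_system E ends \<sigma>" and \<sigma>: "rotation_genus V E ends \<sigma> = mg_genus V E ends"
    using mg_genus_attained[OF finE] .
  let ?D = "mg_darts E" and ?D' = "mg_darts (h ` E)"
  define H :: "_ \<times> bool \<Rightarrow> _ \<times> bool" where "H = apfst h"
  have fin: "finite ?D"
    using finE by (rule finite_mg_darts)
  have \<sigma>_perm: "\<sigma> permutes ?D"
    using rot by (rule rotation_system_permutes)
  have H: "bij_betw H ?D ?D'"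
    unfolding H_def mg_darts_def using inj
    by (auto simp: bij_betw_def inj_on_def apfst_def map_prod_def image_iff split: prod.splits)
  have H_vertex: "dart_vertex ends' (H d) = dart_vertex ends d" if "d \<in> ?D" for d
    using that ends' by (auto simp: H_def dart_vertex_def mg_darts_def apfst_def map_prod_def)
  have H_flip: "dart_flip (H d) = H (dart_flip d)" for d
    by (simp add: H_def dart_flip_def apfst_def map_prod_def split_beta)
  define \<sigma>' where "\<sigma>' = (\<lambda>z. if z \<in> ?D' then H (\<sigma> (inv_into ?D H z)) else z)"
  have \<sigma>'_perm: "\<sigma>' permutes ?D'"
    unfolding \<sigma>'_def H_def using permutes_bij_inv_into[OF \<sigma>_perm H[unfolded H_def]] .
  have \<sigma>'_conj: "\<sigma>' (H d) = H (\<sigma> d)" if "d \<in> ?D" for d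
    using that bij_betw_imp_inj_on[OF H] bij_betwE[OF H] by (simp add: \<sigma>'_def)
  have rot': "rotation_system (h ` E) ends' \<sigma>'"
    unfolding rotation_system_def
  proof (intro conjI ballI \<sigma>'_perm)
    fix z assume "z \<in> ?D'"
    then obtain d where d: "d \<in> ?D" "z = H d"
      using bij_betw_imp_surj_on[OF H] by blast
    have "orbit \<sigma>' (H d) = H ` orbit \<sigma> d"
      using \<sigma>_perm fin d(1) \<sigma>'_conj by (rule orbit_conj)
    then have "orbit \<sigma>' z = H ` {d' \<in> ?D. dart_vertex ends d' = dart_vertex ends d}"
      using rotation_system_orbit[OF rot d(1)] d(2) by simp
    also have "\<dots> = {z' \<in> ?D'. dart_vertex ends' z' = dart_vertex ends' z}"
    proof (intro set_eqI iffI)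
      fix z' assume "z' \<in> H ` {d' \<in> ?D. dart_vertex ends d' = dart_vertex ends d}"
      then show "z' \<in> {z' \<in> ?D'. dart_vertex ends' z' = dart_vertex ends' z}"
        using bij_betwE[OF H] H_vertex d by auto
    next
      fix z' assume z': "z' \<in> {z' \<in> ?D'. dart_vertex ends' z' = dart_vertex ends' z}"
      then obtain d' where "d' \<in> ?D" "z' = H d'"
        using bij_betw_imp_surj_on[OF H] by blast
      then show "z' \<in> H ` {d' \<in> ?D. dart_vertex ends d' = dart_vertex ends d}"
        using z' H_vertex d by auto
    qed
    finally show "orbit \<sigma>' z = {z' \<in> ?D'. dart_vertex ends' z' = dart_vertex ends' z}" .
  qed
  have "num_cycles (face_perm \<sigma>' (h ` E)) ?D' = num_cycles (face_perm \<sigma> E) ?D"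
  proof (rule num_cycles_conj[OF face_perm_permutes[OF \<sigma>_perm] fin H])
    fix d assume "d \<in> ?D"
    then show "face_perm \<sigma>' (h ` E) (H d) = H (face_perm \<sigma> E d)"
      using bij_betwE[OF H] \<sigma>'_conj H_flip by (simp add: face_perm_def)
  qed
  moreover have "isolated_vertices V (h ` E) ends' = isolated_vertices V E ends"
  proof -
    have "(\<forall>z \<in> ?D'. dart_vertex ends' z \<noteq> w) \<longleftrightarrow> (\<forall>d \<in> ?D. dart_vertex ends d \<noteq> w)" for w
      unfolding bij_betw_imp_surj_on[OF H, symmetric] using H_vertex by (simp add: Ball_image_comp)
    then show ?thesis
      unfolding isolated_vertices_def by simp
  qed
  moreover have "mg_adj (h ` E) ends' = mg_adj E ends"
    unfolding mg_adj_def using ends' by force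
  then have "num_components V (h ` E) ends' = num_components V E ends"
    unfolding num_components_def by simp
  ultimately have "rotation_genus V (h ` E) ends' \<sigma>' = rotation_genus V E ends \<sigma>"
    unfolding rotation_genus_def
    using num_faces_eq_num_cycles[OF \<sigma>'_perm, of V ends']
      num_faces_eq_num_cycles[OF \<sigma>_perm, of V ends] card_image[OF inj]
    by simp
  then show ?thesis
    using mg_genus_le[OF rot', of V] \<sigma> by simp
qed

lemma mg_genus_le_union:
  assumes "finite V" "finite F" "finite T" "\<forall>t \<in> T. fst (ends t) \<in> V \<and> snd (ends t) \<in> V"
  shows "mg_genus V F ends \<le> mg_genus V (F \<union> T) ends"
  using assms(3,4)
proof (induct T rule: finite_induct)
  case (insert t T)
  show ?case
  proof (cases "t \<in> F \<union> T")
    case False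
    then interpret edge_insertion "F \<union> T" ends t
      using assms(2) insert(1) by unfold_locales auto
    have "mg_genus V (F \<union> T) ends \<le> mg_genus V (insert t (F \<union> T)) ends"
      using insert(4) by (intro mg_genus_le_insert[OF assms(1)]) simp_all
    then show ?thesis using insert by simp
  qed (use insert in \<open>simp add: insert_absorb\<close>)
qed simp

lemma mg_genus_union_le:
  assumes "finite V" "finite F" "finite T"
    and "\<forall>t \<in> T. (\<exists>f \<in> F. ends f = ends t) \<or> (fst (ends t) = snd (ends t) \<and> fst (ends t) \<in> V)"
  shows "mg_genus V (F \<union> T) ends \<le> mg_genus V F ends"
  using assms(3,4)
proof (induct T rule: finite_induct)
  case (insert t T)
  show ?case
  proof (cases "t \<in> F \<union> T")
    case False
    then interpret edge_insertion "F \<union> T" ends t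
      using assms(2) insert(1) by unfold_locales auto
    have "mg_genus V (insert t (F \<union> T)) ends \<le> mg_genus V (F \<union> T) ends"
      using insert(4) by (intro mg_genus_insert_parallel_or_loop[OF assms(1)]) auto
    then show ?thesis using insert by simp
  qed (use insert in \<open>simp add: insert_absorb\<close>)
qed simp

text \<open>If every edge of a second multigraph on V is a loop or parallel to an edge of the first,
  its genus is at most that of the first: take the disjoint union, which has the genus of the
  first graph, and delete the edges of the first.\<close>

lemma mg_genus_le_of_loops_and_parallels:
  fixes E E' :: "'e set" and ends ends' :: "'e \<Rightarrow> 'v \<times> 'v"
  assumes "finite V" "finite E" "finite E'"
    and ends_in_V: "\<And>e. e \<in> E \<Longrightarrow> fst (ends e) \<in> V \<and> snd (ends e) \<in> V"
    and loop_or_parallel: "\<And>e'. e' \<in> E' \<Longrightarrow>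
      (fst (ends' e') = snd (ends' e') \<and> fst (ends' e') \<in> V) \<or> (\<exists>e \<in> E. ends' e' = ends e)"
  shows "mg_genus V E' ends' \<le> mg_genus V E ends"
proof -
  define ends_sum where "ends_sum = case_sum ends ends'"
  have "mg_genus V E' ends' = mg_genus V (projr ` (Inr ` E' :: ('e + 'e) set)) ends'"
    by (simp add: image_image)
  also have "\<dots> \<le> mg_genus V (Inr ` E') ends_sum"
    using assms(3) by (intro mg_genus_image_le) (auto simp: ends_sum_def inj_on_def)
  also have "\<dots> \<le> mg_genus V (Inr ` E' \<union> Inl ` E) ends_sum"
    using assms(1-3) ends_in_V by (intro mg_genus_le_union) (auto simp: ends_sum_def)
  also have "\<dots> = mg_genus V (Inl ` E \<union> Inr ` E') ends_sum"
    by (simp add: Un_commute)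
  also have "\<dots> \<le> mg_genus V (Inl ` E) ends_sum"
    using assms(1-3) by (intro mg_genus_union_le) (auto simp: ends_sum_def dest!: loop_or_parallel)
  also have "\<dots> \<le> mg_genus V E ends"
    using assms(2) by (intro mg_genus_image_le) (simp_all add: ends_sum_def)
  finally show ?thesis .
qed

section \<open>Minimal DFAs\<close>

lemma dfa_run_in_states:
  "is_dfa \<Sigma> A \<Longrightarrow> q \<in> states A \<Longrightarrow> w \<in> lists \<Sigma> \<Longrightarrow> foldl (delta A) q w \<in> states A"
  by (induct w arbitrary: q) (auto simp: is_dfa_def)

lemma dfa_lang_append_iff:
  "w \<in> lists \<Sigma> \<Longrightarrow> v \<in> lists \<Sigma> \<Longrightarrow>
     foldl (delta M) (foldl (delta M) (init M) w) v \<in> final M \<longleftrightarrow> w @ v \<in> dfa_lang \<Sigma> M"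
  by (simp add: dfa_lang_def)

lemma minimal_dfa_card_le:
  "minimal_dfa \<Sigma> L M \<Longrightarrow> is_dfa \<Sigma> A \<Longrightarrow> dfa_lang \<Sigma> A = L \<Longrightarrow> card (states M) \<le> card (states A)"
  unfolding minimal_dfa_def by blast

lemma minimal_dfa_reachable:
  assumes min: "minimal_dfa \<Sigma> L M" and q: "q \<in> states M"
  shows "\<exists>w \<in> lists \<Sigma>. foldl (delta M) (init M) w = q"
proof -
  have M: "is_dfa \<Sigma> M" "dfa_lang \<Sigma> M = L"
    using min unfolding minimal_dfa_def by auto
  define R where "R = {foldl (delta M) (init M) w | w. w \<in> lists \<Sigma>}"
  have R_sub: "R \<subseteq> states M"
    unfolding R_def using dfa_run_in_states[OF M(1)] M(1) by (auto simp: is_dfa_def)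
  have "is_dfa \<Sigma> (M\<lparr>states := R, final := final M \<inter> R\<rparr>)"
    unfolding is_dfa_def
  proof (intro conjI ballI)
    show "init (M\<lparr>states := R, final := final M \<inter> R\<rparr>) \<in> states (M\<lparr>states := R, final := final M \<inter> R\<rparr>)"
      unfolding R_def by (force intro: exI[of _ "[]"])
    fix p a assume "p \<in> states (M\<lparr>states := R, final := final M \<inter> R\<rparr>)" "a \<in> \<Sigma>"
    then obtain w where "w \<in> lists \<Sigma>" "p = foldl (delta M) (init M) w"
      unfolding R_def by auto
    then show "delta (M\<lparr>states := R, final := final M \<inter> R\<rparr>) p a \<in> states (M\<lparr>states := R, final := final M \<inter> R\<rparr>)"
      using \<open>a \<in> \<Sigma>\<close> unfolding R_def by (auto intro!: exI[of _ "w @ [a]"])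
  qed (use R_sub M(1) in \<open>auto simp: is_dfa_def intro: finite_subset\<close>)
  moreover have "dfa_lang \<Sigma> (M\<lparr>states := R, final := final M \<inter> R\<rparr>) = L"
    using M(2) unfolding dfa_lang_def R_def by auto
  ultimately have "card (states M) \<le> card R"
    using minimal_dfa_card_le[OF min] by fastforce
  then have "R = states M"
    using R_sub M(1) by (meson card_seteq is_dfa_def)
  then have "q \<in> R"
    using q by simp
  then show ?thesis
    unfolding R_def by auto
qed

definition dfa_equiv :: "'a set \<Rightarrow> 'a dfa \<Rightarrow> nat \<Rightarrow> nat \<Rightarrow> bool" where
  "dfa_equiv \<Sigma> M q q' \<longleftrightarrow>
     (\<forall>w \<in> lists \<Sigma>. foldl (delta M) q w \<in> final M \<longleftrightarrow> foldl (delta M) q' w \<in> final M)"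

lemma dfa_equiv_foldl:
  "dfa_equiv \<Sigma> M q q' \<Longrightarrow> w \<in> lists \<Sigma> \<Longrightarrow>
     dfa_equiv \<Sigma> M (foldl (delta M) q w) (foldl (delta M) q' w)"
  unfolding dfa_equiv_def by (metis append_in_lists_conv foldl_append)

lemma dfa_equiv_sym: "dfa_equiv \<Sigma> M q q' \<Longrightarrow> dfa_equiv \<Sigma> M q' q"
  unfolding dfa_equiv_def by simp

lemma dfa_equiv_trans: "dfa_equiv \<Sigma> M q q' \<Longrightarrow> dfa_equiv \<Sigma> M q' q'' \<Longrightarrow> dfa_equiv \<Sigma> M q q''"
  unfolding dfa_equiv_def by simp

lemma dfa_equiv_final: "dfa_equiv \<Sigma> M q q' \<Longrightarrow> q \<in> final M \<longleftrightarrow> q' \<in> final M"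
  unfolding dfa_equiv_def by (drule bspec[of _ _ "[]"]) simp_all

definition dfa_quotient :: "(nat \<Rightarrow> nat) \<Rightarrow> 'a dfa \<Rightarrow> 'a dfa" where
  "dfa_quotient rep M = \<lparr>states = rep ` states M, init = rep (init M),
     final = final M \<inter> rep ` states M, delta = (\<lambda>p a. rep (delta M p a))\<rparr>"

lemma dfa_quotient:
  assumes M: "is_dfa \<Sigma> M"
    and rep: "\<And>q. q \<in> states M \<Longrightarrow> rep q \<in> states M \<and> dfa_equiv \<Sigma> M (rep q) q"
  defines "Q \<equiv> dfa_quotient rep M"
  shows "is_dfa \<Sigma> Q" and "dfa_lang \<Sigma> Q = dfa_lang \<Sigma> M"
proof -
  show Q: "is_dfa \<Sigma> Q"
    using M rep unfolding is_dfa_def Q_def dfa_quotient_def by auto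
  have run: "foldl (delta Q) (rep q) w \<in> rep ` states M \<and>
      dfa_equiv \<Sigma> M (foldl (delta Q) (rep q) w) (foldl (delta M) q w)"
    if "w \<in> lists \<Sigma>" "q \<in> states M" for w q
    using that
  proof (induction w arbitrary: q rule: lists.induct)
    case Nil
    then show ?case using rep by simp
  next
    case (Cons a w)
    define q' where "q' = delta M (rep q) a"
    have q': "q' \<in> states M"
      using M rep Cons unfolding is_dfa_def q'_def by simp
    have "dfa_equiv \<Sigma> M q' (delta M q a)"
      using dfa_equiv_foldl[of \<Sigma> M "rep q" q "[a]"] rep Cons unfolding q'_def by simp
    then have "dfa_equiv \<Sigma> M (foldl (delta M) q' w) (foldl (delta M) q (a # w))"
      using dfa_equiv_foldl Cons by simp
    then show ?case
      using Cons.IH[OF q'] unfolding q'_def Q_def dfa_quotient_def dfa_equiv_def by simp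
  qed
  show "dfa_lang \<Sigma> Q = dfa_lang \<Sigma> M"
  proof (intro set_eqI)
    fix w
    have "init M \<in> states M"
      using M by (simp add: is_dfa_def)
    have "foldl (delta Q) (init Q) w \<in> final Q \<longleftrightarrow> foldl (delta M) (init M) w \<in> final M"
      if "w \<in> lists \<Sigma>"
    proof -
      note r = run[OF that \<open>init M \<in> states M\<close>]
      have "init Q = rep (init M)" "final Q = final M \<inter> rep ` states M"
        by (simp_all add: Q_def dfa_quotient_def)
      then show ?thesis
        using r dfa_equiv_final[OF conjunct2[OF r]] by auto
    qed
    then show "w \<in> dfa_lang \<Sigma> Q \<longleftrightarrow> w \<in> dfa_lang \<Sigma> M"
      unfolding dfa_lang_def by blast
  qed
qed

lemma minimal_dfa_equiv_eq:
  assumes min: "minimal_dfa \<Sigma> L M" and q: "q \<in> states M" "q' \<in> states M"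
    and equiv: "dfa_equiv \<Sigma> M q q'"
  shows "q = q'"
proof -
  have M: "is_dfa \<Sigma> M" "dfa_lang \<Sigma> M = L" "finite (states M)"
    using min unfolding minimal_dfa_def is_dfa_def by auto
  define rep where "rep p = (LEAST p'. p' \<in> states M \<and> dfa_equiv \<Sigma> M p' p)" for p
  have rep: "rep p \<in> states M \<and> dfa_equiv \<Sigma> M (rep p) p" if "p \<in> states M" for p
    unfolding rep_def using that LeastI[of "\<lambda>p'. p' \<in> states M \<and> dfa_equiv \<Sigma> M p' p" p]
    by (simp add: dfa_equiv_def)
  have "dfa_equiv \<Sigma> M p q \<longleftrightarrow> dfa_equiv \<Sigma> M p q'" for p
    using dfa_equiv_trans[OF _ equiv] dfa_equiv_trans[OF _ dfa_equiv_sym[OF equiv]] by blast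
  then have "rep q = rep q'"
    unfolding rep_def by (simp only:)
  note Q = dfa_quotient[OF M(1) rep]
  have "card (states M) \<le> card (states (dfa_quotient rep M))"
    using minimal_dfa_card_le[OF min Q(1)] Q(2) M(2) by simp
  then have "card (states M) \<le> card (rep ` states M)"
    by (simp add: dfa_quotient_def)
  then have "inj_on rep (states M)"
    using M(3) card_image_le[OF M(3), of rep] by (simp add: eq_card_imp_inj_on)
  then show ?thesis
    using \<open>rep q = rep q'\<close> q by (meson inj_onD)
qed

lemma minimal_dfa_run_cong:
  assumes min: "minimal_dfa \<Sigma> L M" and A: "dfa_lang \<Sigma> A = L"
    and w: "w \<in> lists \<Sigma>" "w' \<in> lists \<Sigma>"
    and same: "foldl (delta A) (init A) w = foldl (delta A) (init A) w'"
  shows "foldl (delta M) (init M) w = foldl (delta M) (init M) w'"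
proof (rule minimal_dfa_equiv_eq[OF min])
  have M: "is_dfa \<Sigma> M" "dfa_lang \<Sigma> M = L"
    using min unfolding minimal_dfa_def by auto
  then show "foldl (delta M) (init M) w \<in> states M" "foldl (delta M) (init M) w' \<in> states M"
    using dfa_run_in_states w by (auto simp: is_dfa_def)
  show "dfa_equiv \<Sigma> M (foldl (delta M) (init M) w) (foldl (delta M) (init M) w')"
    unfolding dfa_equiv_def
  proof
    fix v assume v: "v \<in> lists \<Sigma>"
    have "foldl (delta M) (foldl (delta M) (init M) w) v \<in> final M \<longleftrightarrow> w @ v \<in> L"
      using dfa_lang_append_iff[OF w(1) v, of M] unfolding M(2) .
    also have "\<dots> \<longleftrightarrow> foldl (delta A) (foldl (delta A) (init A) w') v \<in> final A"
      using dfa_lang_append_iff[OF w(1) v, of A] unfolding A same ..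
    also have "\<dots> \<longleftrightarrow> w' @ v \<in> L"
      using dfa_lang_append_iff[OF w(2) v, of A] unfolding A .
    also have "\<dots> \<longleftrightarrow> foldl (delta M) (foldl (delta M) (init M) w') v \<in> final M"
      using dfa_lang_append_iff[OF w(2) v, of M] unfolding M(2) ..
    finally show "foldl (delta M) (foldl (delta M) (init M) w) v \<in> final M \<longleftrightarrow>
      foldl (delta M) (foldl (delta M) (init M) w') v \<in> final M" .
  qed
qed

lemma minimal_dfa_quotient_map:
  assumes "minimal_dfa \<Sigma> L M" "dfa_lang \<Sigma> A = L"
  obtains \<pi> where "\<And>w. w \<in> lists \<Sigma> \<Longrightarrow> \<pi> (foldl (delta A) (init A) w) = foldl (delta M) (init M) w"
proof
  fix w assume w: "w \<in> lists \<Sigma>"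
  define w' where "w' = (SOME w'. w' \<in> lists \<Sigma> \<and> foldl (delta A) (init A) w' = foldl (delta A) (init A) w)"
  have "w' \<in> lists \<Sigma> \<and> foldl (delta A) (init A) w' = foldl (delta A) (init A) w"
    unfolding w'_def
    using someI[of "\<lambda>w'. w' \<in> lists \<Sigma> \<and> foldl (delta A) (init A) w' = foldl (delta A) (init A) w" w] w
    by simp
  then show "foldl (delta M) (init M) w' = foldl (delta M) (init M) w"
    using minimal_dfa_run_cong[OF assms] w by blast
qed

section \<open>The genus of a language\<close>

text \<open>A DFA N that can be simulated inside A, each N-step being either a self-loop or an
  A-step, is recognised by a DFA on the states of A whose edges are loops or copies of
  edges of A; so its genus is at most that of A.\<close>

lemma dfa_genus_le_simulation:
  assumes \<Sigma>: "finite \<Sigma>" and A: "is_dfa \<Sigma> A"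
    and R: "R \<subseteq> states A" "i \<in> R" "h i = init N"
    and step: "\<And>p b. p \<in> R \<Longrightarrow> b \<in> \<Sigma> \<Longrightarrow>
      delta N (h p) b = h p \<or> (\<exists>c \<in> \<Sigma>. delta A p c \<in> R \<and> h (delta A p c) = delta N (h p) b)"
  shows "\<exists>A'. is_dfa \<Sigma> A' \<and> dfa_lang \<Sigma> A' = dfa_lang \<Sigma> N \<and> dfa_genus \<Sigma> A' \<le> dfa_genus \<Sigma> A"
proof -
  let ?sim = "\<lambda>p b c. c \<in> \<Sigma> \<and> delta A p c \<in> R \<and> h (delta A p c) = delta N (h p) b"
  define move where "move p b = (if \<exists>c. ?sim p b c then delta A p (SOME c. ?sim p b c) else p)" for p b
  have move_R: "move p b \<in> R \<and> h (move p b) = delta N (h p) b" if "p \<in> R" "b \<in> \<Sigma>" for p b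
  proof (cases "\<exists>c. ?sim p b c")
    case True
    then show ?thesis
      unfolding move_def using someI_ex[OF True] by simp
  next
    case False
    then show ?thesis
      unfolding move_def using step[OF that] that by auto
  qed
  have move_edge: "move p b = p \<or> (\<exists>c \<in> \<Sigma>. move p b = delta A p c)" for p b
    unfolding move_def using someI_ex[of "?sim p b"] by auto
  define A' where "A' = \<lparr>states = states A, init = i, final = {p \<in> R. h p \<in> final N}, delta = move\<rparr>"
  have run: "foldl move i w \<in> R \<and> h (foldl move i w) = foldl (delta N) (init N) w"
    if "w \<in> lists \<Sigma>" for w
    using that by (induct w rule: rev_induct) (simp_all add: R(2,3) move_R)
  have "is_dfa \<Sigma> A'"
    using A R(1,2) move_edge unfolding is_dfa_def A'_def by (auto; metis)
  moreover have "w \<in> dfa_lang \<Sigma> A' \<longleftrightarrow> w \<in> dfa_lang \<Sigma> N" for w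
  proof (cases "w \<in> lists \<Sigma>")
    case True
    with run[OF True] show ?thesis
      unfolding dfa_lang_def A'_def by simp
  qed (simp add: dfa_lang_def)
  then have "dfa_lang \<Sigma> A' = dfa_lang \<Sigma> N"
    by blast
  moreover have "dfa_genus \<Sigma> A' \<le> dfa_genus \<Sigma> A"
    unfolding dfa_genus_def A'_def
  proof (simp, rule mg_genus_le_of_loops_and_parallels)
    show "finite (states A)" "finite (states A \<times> \<Sigma>)" "finite (states A \<times> \<Sigma>)"
      using A \<Sigma> by (simp_all add: is_dfa_def)
    show "\<And>e. e \<in> states A \<times> \<Sigma> \<Longrightarrow>
        fst (case e of (q, a) \<Rightarrow> (q, delta A q a)) \<in> states A \<and> snd (case e of (q, a) \<Rightarrow> (q, delta A q a)) \<in> states A"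
      using A by (auto simp: is_dfa_def)
  next
    fix e' assume "e' \<in> states A \<times> \<Sigma>"
    then obtain q b where qb: "e' = (q, b)" "q \<in> states A"
      by blast
    consider "move q b = q" | c where "c \<in> \<Sigma>" "move q b = delta A q c"
      using move_edge by blast
    then show "fst (case e' of (q, b) \<Rightarrow> (q, move q b)) = snd (case e' of (q, b) \<Rightarrow> (q, move q b)) \<and>
        fst (case e' of (q, b) \<Rightarrow> (q, move q b)) \<in> states A \<or>
      (\<exists>e \<in> states A \<times> \<Sigma>. (case e' of (q, b) \<Rightarrow> (q, move q b)) = (case e of (q, a) \<Rightarrow> (q, delta A q a)))"
    proof cases
      case 2
      then have "(case e' of (q, b) \<Rightarrow> (q, move q b)) = (case (q, c) of (q, a) \<Rightarrow> (q, delta A q a))"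
        using qb by simp
      then show ?thesis
        using qb 2 by blast
    qed (use qb in simp)
  qed
  ultimately show ?thesis by blast
qed

lemma simple_digraph_iso_sym:
  assumes "simple_digraph_iso \<Sigma> M M'"
  shows "simple_digraph_iso \<Sigma> M' M"
proof -
  obtain f where f: "bij_betw f (states M) (states M')"
    and edges: "\<forall>q \<in> states M. \<forall>q' \<in> states M.
      dfa_simple_edge \<Sigma> M q q' \<longleftrightarrow> dfa_simple_edge \<Sigma> M' (f q) (f q')"
    using assms unfolding simple_digraph_iso_def by blast
  let ?g = "inv_into (states M) f"
  have "bij_betw ?g (states M') (states M)"
    using f by (rule bij_betw_inv_into)
  moreover have "\<forall>q \<in> states M'. \<forall>q' \<in> states M'.
      dfa_simple_edge \<Sigma> M' q q' \<longleftrightarrow> dfa_simple_edge \<Sigma> M (?g q) (?g q')"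
    using edges calculation bij_betw_inv_into_right[OF f] bij_betwE by metis
  ultimately show ?thesis
    unfolding simple_digraph_iso_def by blast
qed

lemma dfa_simple_edge_transfer:
  assumes f: "bij_betw f (states M) (states M')"
    and edges: "\<forall>q \<in> states M. \<forall>q' \<in> states M.
      dfa_simple_edge \<Sigma> M q q' \<longleftrightarrow> dfa_simple_edge \<Sigma> M' (f q) (f q')"
    and M': "is_dfa \<Sigma> M'" and q: "q \<in> states M" and b: "b \<in> \<Sigma>"
    and moves: "delta M' (f q) b \<noteq> f q"
  shows "\<exists>c \<in> \<Sigma>. f (delta M q c) = delta M' (f q) b"
proof -
  let ?t = "delta M' (f q) b"
  have "?t \<in> f ` states M"
    using f M' q b by (auto simp: is_dfa_def bij_betw_def)
  then obtain q' where q': "q' \<in> states M" "?t = f q'"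
    by (rule imageE)
  then have "dfa_simple_edge \<Sigma> M' (f q) (f q')"
    using moves b unfolding dfa_simple_edge_def by auto
  then have "dfa_simple_edge \<Sigma> M q q'"
    using edges q q'(1) by blast
  then show ?thesis
    using q'(2) unfolding dfa_simple_edge_def by auto
qed

text \<open>Given a DFA A for L of least genus, the minimal DFA M of L is a quotient of the
  reachable part of A. Transporting the transitions of M' along the isomorphism shows that
  M' can be simulated inside A: a non-loop M'-transition is an edge of G(L'), hence of G(L),
  hence the image of a transition of A.\<close>

lemma lang_genus_le_of_iso:
  assumes \<Sigma>: "finite \<Sigma>" and L: "regular \<Sigma> L"
    and M: "minimal_dfa \<Sigma> L M" and M': "minimal_dfa \<Sigma> L' M'"
    and iso: "simple_digraph_iso \<Sigma> M M'"
  shows "lang_genus \<Sigma> L' \<le> lang_genus \<Sigma> L"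
proof -
  have "\<exists>n A. is_dfa \<Sigma> A \<and> dfa_lang \<Sigma> A = L \<and> dfa_genus \<Sigma> A = n"
    using L unfolding regular_def by blast
  from LeastI_ex[OF this] obtain A where A: "is_dfa \<Sigma> A" "dfa_lang \<Sigma> A = L"
    and genus_A: "dfa_genus \<Sigma> A = lang_genus \<Sigma> L"
    unfolding lang_genus_def by blast
  obtain \<pi> where \<pi>: "\<And>w. w \<in> lists \<Sigma> \<Longrightarrow> \<pi> (foldl (delta A) (init A) w) = foldl (delta M) (init M) w"
    using minimal_dfa_quotient_map[OF M A(2)] by blast
  obtain f where f: "bij_betw f (states M) (states M')"
    and edges: "\<forall>q \<in> states M. \<forall>q' \<in> states M.
      dfa_simple_edge \<Sigma> M q q' \<longleftrightarrow> dfa_simple_edge \<Sigma> M' (f q) (f q')"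
    using iso unfolding simple_digraph_iso_def by blast
  have DM: "is_dfa \<Sigma> M" "is_dfa \<Sigma> M'" "dfa_lang \<Sigma> M' = L'"
    using M M' unfolding minimal_dfa_def by auto
  define R where "R = {foldl (delta A) (init A) w | w. w \<in> lists \<Sigma>}"
  have R: "R \<subseteq> states A"
    unfolding R_def using A(1) by (auto intro: dfa_run_in_states simp: is_dfa_def)
  obtain i where i: "i \<in> R" "(f \<circ> \<pi>) i = init M'"
  proof -
    have "init M' \<in> f ` states M"
      using f DM(2) by (simp add: is_dfa_def bij_betw_def)
    then obtain q where q: "q \<in> states M" "init M' = f q"
      by (rule imageE)
    then obtain w where "w \<in> lists \<Sigma>" "foldl (delta M) (init M) w = q"
      using minimal_dfa_reachable[OF M q(1)] by blast
    then show ?thesis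
      using that[of "foldl (delta A) (init A) w"] \<pi> q(2) unfolding R_def by auto
  qed
  have "delta M' ((f \<circ> \<pi>) p) b = (f \<circ> \<pi>) p \<or>
      (\<exists>c \<in> \<Sigma>. delta A p c \<in> R \<and> (f \<circ> \<pi>) (delta A p c) = delta M' ((f \<circ> \<pi>) p) b)"
    if "p \<in> R" "b \<in> \<Sigma>" for p b
  proof (cases "delta M' (f (\<pi> p)) b = f (\<pi> p)")
    case False
    obtain w where w: "w \<in> lists \<Sigma>" "p = foldl (delta A) (init A) w"
      using \<open>p \<in> R\<close> unfolding R_def by blast
    have "\<pi> p \<in> states M"
      using \<pi> w DM(1) by (auto intro: dfa_run_in_states simp: is_dfa_def)
    then obtain c where c: "c \<in> \<Sigma>" "f (delta M (\<pi> p) c) = delta M' (f (\<pi> p)) b"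
      using dfa_simple_edge_transfer[OF f edges DM(2) _ \<open>b \<in> \<Sigma>\<close> False] by blast
    have "w @ [c] \<in> lists \<Sigma>" "delta A p c = foldl (delta A) (init A) (w @ [c])"
      using w c by simp_all
    then have "delta A p c \<in> R"
      unfolding R_def by blast
    moreover have "\<pi> (delta A p c) = delta M (\<pi> p) c"
      using \<pi>[OF \<open>w @ [c] \<in> lists \<Sigma>\<close>] \<pi>[OF w(1)] w(2) \<open>delta A p c = _\<close> by simp
    ultimately show ?thesis
      using c by auto
  qed simp
  then obtain A' where A': "is_dfa \<Sigma> A'" "dfa_lang \<Sigma> A' = L'" "dfa_genus \<Sigma> A' \<le> dfa_genus \<Sigma> A"
    using dfa_genus_le_simulation[of \<Sigma> A R i "f \<circ> \<pi>" M', OF \<Sigma> A(1) R i] DM(3) by blast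
  then have "lang_genus \<Sigma> L' \<le> dfa_genus \<Sigma> A'"
    unfolding lang_genus_def by (intro Least_le) blast
  then show ?thesis
    using A'(3) genus_A by simp
qed

theorem mainTheorem12:
  fixes \<Sigma> :: "'a set" and L L' :: "'a list set" and M M' :: "'a dfa"
  assumes "finite \<Sigma>"
    and "regular \<Sigma> L" and "regular \<Sigma> L'"
    and "minimal_dfa \<Sigma> L M" and "minimal_dfa \<Sigma> L' M'"
    and "simple_digraph_iso \<Sigma> M M'"
  shows "lang_genus \<Sigma> L = lang_genus \<Sigma> L'"
  using lang_genus_le_of_iso[OF assms(1,2,4,5,6)]
    lang_genus_le_of_iso[OF assms(1,3,5,4) simple_digraph_iso_sym[OF assms(6)]]
  by simp

end
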